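(* For every integer $N\ge1$ there exist $\delta_0>0$ and $C>0$, depending only on $N$, such that the following holds. Let $U_\varphi,V_\varphi\subset\mathbb R^2$ be open with $\overline B_\infty(0,1)=\{\max(|x_1|,|x_2|)\le1\}\subset U_\varphi\cap V_\varphi$, and let $\varphi:U_\varphi\to V_\varphi$ be a $C^{N+1}$ diffeomorphism onto its image with $\varphi(0)=0$, $d\varphi(0)=\mathrm{diag}(2,1/2)$, and $\sup_{U_\varphi}|\partial^\alpha\varphi|\le\delta$ for $2\le|\alpha|\le N+1$, where $0<\delta\le\delta_0$. Let $1\le k\le N$ and let $F\in C^k([-1,1];\mathbb R)$ satisfy $F(0)=0$ and $\|F\|_{C^k}\le1$. Then $$\|\Phi_uF\|_{C^k}\le \tfrac14\|F\|_{C^k}+C\delta.$$ If additionally $\|F\|_{C^{k,1}}\le 1$, then $$\|\Phi_uF\|_{C^{k,1}}\le\tfrac14\|F\|_{C^{k,1}}+C\delta.$$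
   Context: For $H:[-1,1]\to\mathbb R$ let $\mathcal G_u(H):=\{(x_1,x_2):|x_1|\le1,\ x_2=H(x_1)\}$. For $F$ with $F(0)=0$ and $\sup|F'|\le1$, $\Phi_uF:[-1,1]\to\mathbb R$ denotes the (unique) function with $\varphi(\mathcal G_u(F))\cap\{|x_1|\le1\}=\mathcal G_u(\Phi_uF)$ (the graph transform). Seminorms: $\|F\|_{C^k}:=\max_{1\le j\le k}\sup_{[-1,1]}|\partial_{x_1}^jF|$, and $\|F\|_{C^{k,1}}:=\max\big(\|F\|_{C^k},\ \sup_{x_1\ne\tilde x_1}\frac{|\partial^k_{x_1}F(x_1)-\partial^k_{x_1}F(\tilde x_1)|}{|x_1-\tilde x_1|}\big)$. *)

theory Defs
  imports "HOL-Analysis.Analysis"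
begin

text \<open>Points of the plane are pairs (x1, x2). Unit coordinate direction:
  False = x1-direction, True = x2-direction.\<close>
definition coord_dir :: "bool \<Rightarrow> real \<times> real" where
  "coord_dir b = (if b then (0, 1) else (1, 0))"

definition partial :: "bool \<Rightarrow> (real \<times> real \<Rightarrow> real) \<Rightarrow> real \<times> real \<Rightarrow> real" where
  "partial b f p = deriv (\<lambda>t. f (p + t *\<^sub>R coord_dir b)) 0"

text \<open>Iterated partial derivative; a list ds of directions of length m
  represents a multi-index of order m (all orders of differentiation covered).\<close>
definition iter_partial :: "bool list \<Rightarrow> (real \<times> real \<Rightarrow> real) \<Rightarrow> real \<times> real \<Rightarrow> real" where
  "iter_partial ds f = foldr partial ds f"

definition Cm_on :: "nat \<Rightarrow> (real \<times> real \<Rightarrow> real) \<Rightarrow> (real \<times> real) set \<Rightarrow> bool" where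
  "Cm_on m f U \<longleftrightarrow>
     (\<forall>ds. length ds \<le> m \<longrightarrow> continuous_on U (iter_partial ds f)) \<and>
     (\<forall>ds b. length ds < m \<longrightarrow>
        (\<forall>p\<in>U. (\<lambda>t. iter_partial ds f (p + t *\<^sub>R coord_dir b)) differentiable (at 0)))"

definition diffeo_onto_image :: "nat \<Rightarrow> (real \<times> real \<Rightarrow> real \<times> real) \<Rightarrow>
    (real \<times> real) set \<Rightarrow> (real \<times> real) set \<Rightarrow> bool" where
  "diffeo_onto_image m \<phi> U V \<longleftrightarrow>
     inj_on \<phi> U \<and> \<phi> ` U \<subseteq> V \<and> open (\<phi> ` U) \<and>
     Cm_on m (fst \<circ> \<phi>) U \<and> Cm_on m (snd \<circ> \<phi>) U \<and>
     (\<exists>\<psi>. (\<forall>p\<in>U. \<psi> (\<phi> p) = p) \<and>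
          Cm_on m (fst \<circ> \<psi>) (\<phi> ` U) \<and> Cm_on m (snd \<circ> \<psi>) (\<phi> ` U))"

definition unit_box :: "(real \<times> real) set" where
  "unit_box = {p. \<bar>fst p\<bar> \<le> 1 \<and> \<bar>snd p\<bar> \<le> 1}"

definition graph_u :: "(real \<Rightarrow> real) \<Rightarrow> (real \<times> real) set" where
  "graph_u H = {(x1, H x1) | x1. \<bar>x1\<bar> \<le> 1}"

definition Ck_interval :: "nat \<Rightarrow> (real \<Rightarrow> real) \<Rightarrow> (nat \<Rightarrow> real \<Rightarrow> real) \<Rightarrow> bool" where
  "Ck_interval k F D \<longleftrightarrow> D 0 = F \<and>
     (\<forall>j<k. \<forall>x\<in>{-1..1}. (D j has_real_derivative D (Suc j) x) (at x within {-1..1})) \<and>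
     (\<forall>j\<le>k. continuous_on {-1..1} (D j))"

definition Ck_seminorm :: "nat \<Rightarrow> (nat \<Rightarrow> real \<Rightarrow> real) \<Rightarrow> real" where
  "Ck_seminorm k D = Sup ((\<lambda>(j, x). \<bar>D j x\<bar>) ` ({1..k} \<times> {-1..1}))"

definition Lip_seminorm :: "nat \<Rightarrow> (nat \<Rightarrow> real \<Rightarrow> real) \<Rightarrow> real" where
  "Lip_seminorm k D = Sup {\<bar>D k x - D k y\<bar> / \<bar>x - y\<bar> | x y.
      x \<in> {-1..1} \<and> y \<in> {-1..1} \<and> x \<noteq> y}"

definition Ck1_seminorm :: "nat \<Rightarrow> (nat \<Rightarrow> real \<Rightarrow> real) \<Rightarrow> real" where
  "Ck1_seminorm k D = max (Ck_seminorm k D) (Lip_seminorm k D)"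

end

theory Submission
  imports Defs
begin

text \<open>Write \<open>g t = fst (\<phi> (t, F t))\<close> and \<open>h t = snd (\<phi> (t, F t))\<close>. Since
  \<open>d\<phi>(0) = diag(2, 1/2)\<close> and the higher derivatives of \<open>\<phi>\<close> are \<open>O(\<delta>)\<close>, we have
  \<open>g' = 2 + O(\<delta>)\<close> and \<open>h' = F'/2 + O(\<delta>)\<close> in \<open>C^(k-1)\<close>. So \<open>g\<close> is expanding, its inverse \<open>u\<close>
  maps \<open>[-1,1]\<close> into \<open>[-2/3,2/3]\<close> with \<open>|u'| \<le> 1\<close>, and \<open>\<Phi>\<^sub>u F = h \<circ> u\<close>. With
  \<open>w = 1/g' = 1/2 + O(\<delta>)\<close> the chain rule gives \<open>(\<Phi>\<^sub>u F)^(j) = (T^(j-1) (h'/g')) \<circ> u\<close> for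
  \<open>T f = f' w\<close>, and expanding around \<open>w = 1/2\<close> yields \<open>(\<Phi>\<^sub>u F)^(j) = (F^(j) / 2^(j+1) + O(\<delta>)) \<circ> u\<close>.
  For \<open>j \<ge> 1\<close> the factor \<open>2^-(j+1)\<close> is at most \<open>1/4\<close>; since \<open>u\<close> is 1-Lipschitz, the same bound
  passes to the Lipschitz constant of the \<open>k\<close>-th derivative.\<close>

section \<open>Quantitative \<open>C^m\<close> bounds on \<open>[-1,1]\<close>\<close>

abbreviation I :: "real set" where "I \<equiv> {-1..1}"

text \<open>\<open>Cnorm_le False m B f\<close>: \<open>f \<in> C^m(I)\<close> with all derivatives of order \<open>\<le> m\<close> bounded by \<open>B\<close>;
  \<open>Cnorm_le True m B f\<close> asks in addition that the \<open>m\<close>-th derivative be \<open>B\<close>-Lipschitz.\<close>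
fun Cnorm_le :: "bool \<Rightarrow> nat \<Rightarrow> real \<Rightarrow> (real \<Rightarrow> real) \<Rightarrow> bool" where
  "Cnorm_le lip 0 B f \<longleftrightarrow> continuous_on I f \<and> (\<forall>x\<in>I. \<bar>f x\<bar> \<le> B) \<and>
     (lip \<longrightarrow> (\<forall>x\<in>I. \<forall>y\<in>I. \<bar>f x - f y\<bar> \<le> B * \<bar>x - y\<bar>))"
| "Cnorm_le lip (Suc m) B f \<longleftrightarrow> (\<forall>x\<in>I. \<bar>f x\<bar> \<le> B) \<and>
     (\<exists>f'. (\<forall>x\<in>I. (f has_real_derivative f' x) (at x within I)) \<and> Cnorm_le lip m B f')"

declare Cnorm_le.simps(2) [simp del]

lemma lipschitz_of_deriv_bound:
  assumes "\<And>x. x \<in> I \<Longrightarrow> (f has_real_derivative f' x) (at x within I)"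
    and "\<And>x. x \<in> I \<Longrightarrow> \<bar>f' x\<bar> \<le> B" and "x \<in> I" "y \<in> I"
  shows "\<bar>f x - f y\<bar> \<le> B * \<bar>x - y\<bar>"
  using field_differentiable_bound[of I f f' B x y] assms by auto

lemma Cnorm_le_SucI:
  "(\<And>x. x \<in> I \<Longrightarrow> \<bar>f x\<bar> \<le> B) \<Longrightarrow> (\<And>x. x \<in> I \<Longrightarrow> (f has_real_derivative f' x) (at x within I)) \<Longrightarrow>
    Cnorm_le lip m B f' \<Longrightarrow> Cnorm_le lip (Suc m) B f"
  unfolding Cnorm_le.simps by blast

lemma Cnorm_le_SucE:
  assumes "Cnorm_le lip (Suc m) B f"
  obtains f' where "\<forall>x\<in>I. (f has_real_derivative f' x) (at x within I)"
    "Cnorm_le lip m B f'" "\<forall>x\<in>I. \<bar>f x\<bar> \<le> B"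
  using assms that unfolding Cnorm_le.simps by blast

lemma Cnorm_le_bound: "Cnorm_le lip m B f \<Longrightarrow> x \<in> I \<Longrightarrow> \<bar>f x\<bar> \<le> B"
  by (cases m) (auto elim: Cnorm_le_SucE)

lemma Cnorm_le_nonneg: "Cnorm_le lip m B f \<Longrightarrow> 0 \<le> B"
  using Cnorm_le_bound[of lip m B f 0] by auto

lemma Cnorm_le_continuous: "Cnorm_le lip m B f \<Longrightarrow> continuous_on I f"
  by (cases m) (auto elim!: Cnorm_le_SucE intro: DERIV_continuous_on)

lemma Cnorm_le_mono: "Cnorm_le lip m B f \<Longrightarrow> B \<le> B' \<Longrightarrow> Cnorm_le lip m B' f"
proof (induction m arbitrary: f)
  case 0
  have "\<bar>f x - f y\<bar> \<le> B' * \<bar>x - y\<bar>" if lip "x \<in> I" "y \<in> I" for x y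
  proof -
    have "\<bar>f x - f y\<bar> \<le> B * \<bar>x - y\<bar>" using 0 that by simp
    also have "\<dots> \<le> B' * \<bar>x - y\<bar>" using 0 by (intro mult_right_mono) auto
    finally show ?thesis .
  qed
  with 0 show ?case by force
next
  case (Suc m)
  obtain f' where f': "\<forall>x\<in>I. (f has_real_derivative f' x) (at x within I)"
    "Cnorm_le lip m B f'" "\<forall>x\<in>I. \<bar>f x\<bar> \<le> B"
    using Suc.prems(1) by (rule Cnorm_le_SucE)
  show ?case
  proof (rule Cnorm_le_SucI)
    show "\<bar>f x\<bar> \<le> B'" if "x \<in> I" for x using f'(3) that Suc.prems(2) by force
  qed (use f' Suc in auto)
qed

lemma Cnorm_le_cong:
  assumes "Cnorm_le lip m B f" and eq: "\<And>x. x \<in> I \<Longrightarrow> f x = g x"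
  shows "Cnorm_le lip m B g"
proof (cases m)
  case 0
  have f: "continuous_on I f" "\<forall>x\<in>I. \<bar>f x\<bar> \<le> B"
    "lip \<longrightarrow> (\<forall>x\<in>I. \<forall>y\<in>I. \<bar>f x - f y\<bar> \<le> B * \<bar>x - y\<bar>)"
    using assms(1) unfolding 0 by simp_all
  show ?thesis unfolding 0 Cnorm_le.simps(1)
  proof (intro conjI ballI impI)
    show "continuous_on I g" using continuous_on_eq[OF f(1) eq] .
    show "\<bar>g x\<bar> \<le> B" if "x \<in> I" for x using bspec[OF f(2) that] eq[OF that] by simp
    show "\<bar>g x - g y\<bar> \<le> B * \<bar>x - y\<bar>" if lip "x \<in> I" "y \<in> I" for x y
    proof -
      have "\<bar>f x - f y\<bar> \<le> B * \<bar>x - y\<bar>" using f(3) that by blast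
      then show ?thesis using eq[OF that(2)] eq[OF that(3)] by simp
    qed
  qed
next
  case (Suc n)
  obtain f' where f': "\<forall>x\<in>I. (f has_real_derivative f' x) (at x within I)"
    "Cnorm_le lip n B f'" "\<forall>x\<in>I. \<bar>f x\<bar> \<le> B"
    using assms(1) unfolding Suc by (rule Cnorm_le_SucE)
  show ?thesis unfolding Suc
  proof (rule Cnorm_le_SucI[where f' = f'])
    show "(g has_real_derivative f' x) (at x within I)" if "x \<in> I" for x
      using bspec[OF f'(1) that] zero_less_one that eq by (rule has_field_derivative_transform_within)
    show "\<bar>g x\<bar> \<le> B" if "x \<in> I" for x
      using bspec[OF f'(3) that] eq[OF that] by simp
  qed (rule f'(2))
qed

lemma Cnorm_le_Suc_imp: "Cnorm_le lip (Suc m) B f \<Longrightarrow> Cnorm_le lip m B f"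
proof (induction m arbitrary: f)
  case 0
  obtain f' where f': "\<forall>x\<in>I. (f has_real_derivative f' x) (at x within I)"
    "Cnorm_le lip 0 B f'" "\<forall>x\<in>I. \<bar>f x\<bar> \<le> B"
    using 0 by (rule Cnorm_le_SucE)
  have "continuous_on I f" using f'(1) by (intro DERIV_continuous_on) auto
  moreover have "\<bar>f x - f y\<bar> \<le> B * \<bar>x - y\<bar>" if "x \<in> I" "y \<in> I" for x y
    using f' that by (intro lipschitz_of_deriv_bound[of f f' B]) auto
  ultimately show ?case using f'(3) by simp
next
  case (Suc m)
  obtain f' where f': "\<forall>x\<in>I. (f has_real_derivative f' x) (at x within I)"
    "Cnorm_le lip (Suc m) B f'" "\<forall>x\<in>I. \<bar>f x\<bar> \<le> B"
    using Suc.prems by (rule Cnorm_le_SucE)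
  show ?case using f' Suc.IH[OF f'(2)] by (intro Cnorm_le_SucI[where f' = f']) auto
qed

lemma Cnorm_le_order_mono: "Cnorm_le lip m B f \<Longrightarrow> n \<le> m \<Longrightarrow> Cnorm_le lip n B f"
  by (induction m) (auto simp: le_Suc_eq dest: Cnorm_le_Suc_imp)

lemma Cnorm_le_lipschitz:
  "Cnorm_le True m B f \<Longrightarrow> x \<in> I \<Longrightarrow> y \<in> I \<Longrightarrow> \<bar>f x - f y\<bar> \<le> B * \<bar>x - y\<bar>"
  using Cnorm_le_order_mono[of True m B f 0] by auto

lemma Cnorm_le_const: "\<bar>c\<bar> \<le> B \<Longrightarrow> Cnorm_le lip m B (\<lambda>_. c)"
proof (induction m arbitrary: c)
  case 0
  then show ?case by auto
next
  case (Suc m)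
  then have "Cnorm_le lip m B (\<lambda>_. 0)" by simp
  with Suc.prems show ?case by (intro Cnorm_le_SucI[where f' = "\<lambda>_. 0"]) auto
qed

lemma Cnorm_le_add:
  "Cnorm_le lip m B1 f \<Longrightarrow> Cnorm_le lip m B2 g \<Longrightarrow> Cnorm_le lip m (B1 + B2) (\<lambda>x. f x + g x)"
proof (induction m arbitrary: f g)
  case 0
  have "\<bar>f x + g x - (f y + g y)\<bar> \<le> (B1 + B2) * \<bar>x - y\<bar>" if lip "x \<in> I" "y \<in> I" for x y
  proof -
    have "\<bar>f x + g x - (f y + g y)\<bar> \<le> \<bar>f x - f y\<bar> + \<bar>g x - g y\<bar>" by linarith
    also have "\<dots> \<le> B1 * \<bar>x - y\<bar> + B2 * \<bar>x - y\<bar>" using 0 that by (intro add_mono) auto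
    finally show ?thesis by (simp add: distrib_right)
  qed
  moreover have "\<bar>f x + g x\<bar> \<le> B1 + B2" if "x \<in> I" for x
  proof -
    have "\<bar>f x\<bar> \<le> B1" "\<bar>g x\<bar> \<le> B2" using 0 that by simp_all
    then show ?thesis by linarith
  qed
  ultimately show ?case using 0 by (simp add: continuous_on_add)
next
  case (Suc m)
  obtain f' where f': "\<forall>x\<in>I. (f has_real_derivative f' x) (at x within I)"
    "Cnorm_le lip m B1 f'" "\<forall>x\<in>I. \<bar>f x\<bar> \<le> B1"
    using Suc.prems(1) by (rule Cnorm_le_SucE)
  obtain g' where g': "\<forall>x\<in>I. (g has_real_derivative g' x) (at x within I)"
    "Cnorm_le lip m B2 g'" "\<forall>x\<in>I. \<bar>g x\<bar> \<le> B2"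
    using Suc.prems(2) by (rule Cnorm_le_SucE)
  show ?case
  proof (rule Cnorm_le_SucI)
    show "\<bar>f x + g x\<bar> \<le> B1 + B2" if "x \<in> I" for x
      using f'(3) g'(3) that abs_triangle_ineq[of "f x" "g x"] by fastforce
    show "((\<lambda>x. f x + g x) has_real_derivative f' x + g' x) (at x within I)" if "x \<in> I" for x
      using f'(1) g'(1) that by (intro DERIV_add) auto
  qed (rule Suc.IH[OF f'(2) g'(2)])
qed

lemma Cnorm_le_cmult: "Cnorm_le lip m B f \<Longrightarrow> Cnorm_le lip m (\<bar>c\<bar> * B) (\<lambda>x. c * f x)"
proof (induction m arbitrary: f)
  case 0
  have "\<bar>c * f x - c * f y\<bar> \<le> \<bar>c\<bar> * B * \<bar>x - y\<bar>" if lip "x \<in> I" "y \<in> I" for x y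
  proof -
    have "\<bar>c\<bar> * \<bar>f x - f y\<bar> \<le> \<bar>c\<bar> * (B * \<bar>x - y\<bar>)" using 0 that by (auto intro: mult_left_mono)
    then show ?thesis by (simp add: abs_mult right_diff_distrib[symmetric] mult.assoc)
  qed
  with 0 show ?case by (simp add: abs_mult mult_left_mono continuous_on_mult_left)
next
  case (Suc m)
  obtain f' where f': "\<forall>x\<in>I. (f has_real_derivative f' x) (at x within I)"
    "Cnorm_le lip m B f'" "\<forall>x\<in>I. \<bar>f x\<bar> \<le> B"
    using Suc.prems by (rule Cnorm_le_SucE)
  show ?case
    using f' Suc.IH[OF f'(2)]
    by (intro Cnorm_le_SucI[where f' = "\<lambda>x. c * f' x"]) (auto simp: abs_mult mult_left_mono intro: DERIV_cmult)
qed

lemma Cnorm_le_0_mult: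
  assumes "Cnorm_le lip 0 B1 f" "Cnorm_le lip 0 B2 g"
  shows "Cnorm_le lip 0 (2 * B1 * B2) (\<lambda>x. f x * g x)"
proof -
  have B: "0 \<le> B1" "0 \<le> B2" using assms Cnorm_le_nonneg by blast+
  have f: "continuous_on I f" "\<forall>x\<in>I. \<bar>f x\<bar> \<le> B1"
    "lip \<longrightarrow> (\<forall>x\<in>I. \<forall>y\<in>I. \<bar>f x - f y\<bar> \<le> B1 * \<bar>x - y\<bar>)"
    using assms(1) by simp_all
  have g: "continuous_on I g" "\<forall>x\<in>I. \<bar>g x\<bar> \<le> B2"
    "lip \<longrightarrow> (\<forall>x\<in>I. \<forall>y\<in>I. \<bar>g x - g y\<bar> \<le> B2 * \<bar>x - y\<bar>)"
    using assms(2) by simp_all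
  show ?thesis unfolding Cnorm_le.simps(1)
  proof (intro conjI ballI impI)
    show "continuous_on I (\<lambda>x. f x * g x)" using f(1) g(1) by (rule continuous_on_mult)
    show "\<bar>f x * g x\<bar> \<le> 2 * B1 * B2" if "x \<in> I" for x
    proof -
      have "\<bar>f x * g x\<bar> \<le> B1 * B2"
        unfolding abs_mult using bspec[OF f(2) that] bspec[OF g(2) that] B by (intro mult_mono) auto
      then show ?thesis using B by simp
    qed
    show "\<bar>f x * g x - f y * g y\<bar> \<le> 2 * B1 * B2 * \<bar>x - y\<bar>" if lip "x \<in> I" "y \<in> I" for x y
    proof -
      have "f x * g x - f y * g y = f x * (g x - g y) + g y * (f x - f y)" by algebra
      then have "\<bar>f x * g x - f y * g y\<bar> \<le> \<bar>f x\<bar> * \<bar>g x - g y\<bar> + \<bar>g y\<bar> * \<bar>f x - f y\<bar>"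
        by (simp only: abs_triangle_ineq abs_mult[symmetric])
      also have "\<dots> \<le> B1 * (B2 * \<bar>x - y\<bar>) + B2 * (B1 * \<bar>x - y\<bar>)"
        using f g that B by (intro add_mono mult_mono) auto
      finally show ?thesis by (simp add: algebra_simps)
    qed
  qed
qed

lemma Cnorm_le_mult:
  "Cnorm_le lip m B1 f \<Longrightarrow> Cnorm_le lip m B2 g \<Longrightarrow> Cnorm_le lip m (2 ^ (m + 1) * B1 * B2) (\<lambda>x. f x * g x)"
proof (induction m arbitrary: f g)
  case 0
  then show ?case using Cnorm_le_0_mult by (simp del: Cnorm_le.simps(1))
next
  case (Suc m)
  have B: "0 \<le> B1" "0 \<le> B2" using Suc.prems Cnorm_le_nonneg by blast+
  obtain f' where f': "\<forall>x\<in>I. (f has_real_derivative f' x) (at x within I)"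
    "Cnorm_le lip m B1 f'" "\<forall>x\<in>I. \<bar>f x\<bar> \<le> B1"
    using Suc.prems(1) by (rule Cnorm_le_SucE)
  obtain g' where g': "\<forall>x\<in>I. (g has_real_derivative g' x) (at x within I)"
    "Cnorm_le lip m B2 g'" "\<forall>x\<in>I. \<bar>g x\<bar> \<le> B2"
    using Suc.prems(2) by (rule Cnorm_le_SucE)
  have "Cnorm_le lip m (2 ^ (m + 1) * B1 * B2 + 2 ^ (m + 1) * B1 * B2) (\<lambda>x. f' x * g x + f x * g' x)"
    using Suc.prems(1,2)[THEN Cnorm_le_Suc_imp] by (intro Cnorm_le_add Suc.IH f'(2) g'(2))
  then have deriv: "Cnorm_le lip m (2 ^ (Suc m + 1) * B1 * B2) (\<lambda>x. f' x * g x + f x * g' x)"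
    by (simp add: mult_ac)
  show ?case
  proof (rule Cnorm_le_SucI[OF _ _ deriv])
    show "((\<lambda>x. f x * g x) has_real_derivative f' x * g x + f x * g' x) (at x within I)" if "x \<in> I" for x
      using f'(1) g'(1) that DERIV_mult'[of f "f' x" x I g "g' x"] by (simp add: add.commute)
    show "\<bar>f x * g x\<bar> \<le> 2 ^ (Suc m + 1) * B1 * B2" if "x \<in> I" for x
    proof -
      have "\<bar>f x * g x\<bar> \<le> 1 * (B1 * B2)"
        unfolding abs_mult using f'(3) g'(3) that B by (simp add: mult_mono)
      also have "\<dots> \<le> 2 ^ (Suc m + 1) * (B1 * B2)"
        using B by (intro mult_right_mono one_le_power) auto
      finally show ?thesis by (simp add: mult.assoc)
    qed
  qed
qed

lemma Cnorm_le_0_inverse: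
  assumes "0 < c" and f: "Cnorm_le lip 0 B f" and lower: "\<forall>x\<in>I. c \<le> f x"
  shows "Cnorm_le lip 0 (max (1 / c) (B / c\<^sup>2)) (\<lambda>x. 1 / f x)"
  unfolding Cnorm_le.simps(1)
proof (intro conjI ballI impI)
  have pos: "0 < f x" "c \<le> f x" if "x \<in> I" for x using lower assms(1) that by force+
  have B: "0 \<le> B" using f Cnorm_le_nonneg by blast
  show "continuous_on I (\<lambda>x. 1 / f x)"
    using f pos(1) by (intro continuous_on_divide continuous_on_const) force+
  show "\<bar>1 / f x\<bar> \<le> max (1 / c) (B / c\<^sup>2)" if "x \<in> I" for x
  proof -
    have "\<bar>1 / f x\<bar> \<le> 1 / c" using pos[OF that] assms(1) by (simp add: divide_left_mono)
    then show ?thesis by simp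
  qed
  show "\<bar>1 / f x - 1 / f y\<bar> \<le> max (1 / c) (B / c\<^sup>2) * \<bar>x - y\<bar>" if lip "x \<in> I" "y \<in> I" for x y
  proof -
    have "\<bar>1 / f x - 1 / f y\<bar> = \<bar>f y - f x\<bar> / (f x * f y)"
      using pos(1)[OF that(2)] pos(1)[OF that(3)] by (simp add: field_simps abs_div)
    also have "\<dots> \<le> (B * \<bar>x - y\<bar>) / (c * c)"
    proof (rule frac_le)
      show "\<bar>f y - f x\<bar> \<le> B * \<bar>x - y\<bar>" using f that by (simp add: abs_minus_commute)
      show "c * c \<le> f x * f y"
        using assms(1) pos[OF that(2)] pos[OF that(3)] by (intro mult_mono) auto
    qed (use B assms(1) in auto)
    also have "\<dots> = B / c\<^sup>2 * \<bar>x - y\<bar>" by (simp add: power2_eq_square)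
    also have "\<dots> \<le> max (1 / c) (B / c\<^sup>2) * \<bar>x - y\<bar>" by (intro mult_right_mono) auto
    finally show ?thesis .
  qed
qed

lemma Cnorm_le_inverse:
  assumes "0 < c"
  shows "\<exists>K. \<forall>f. Cnorm_le lip m B f \<and> (\<forall>x\<in>I. c \<le> f x) \<longrightarrow> Cnorm_le lip m K (\<lambda>x. 1 / f x)"
proof (induction m)
  case 0
  show ?case using Cnorm_le_0_inverse[OF assms] by blast
next
  case (Suc m)
  then obtain K where K: "\<And>f. Cnorm_le lip m B f \<Longrightarrow> \<forall>x\<in>I. c \<le> f x \<Longrightarrow> Cnorm_le lip m K (\<lambda>x. 1 / f x)"
    by blast
  define K' where "K' = max (1 / c) (2 ^ (m + 1) * (2 ^ (m + 1) * B * K) * K)"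
  show ?case
  proof (intro exI allI impI)
    fix f assume a: "Cnorm_le lip (Suc m) B f \<and> (\<forall>x\<in>I. c \<le> f x)"
    have pos: "0 < f x" "c \<le> f x" if "x \<in> I" for x using a assms that by force+
    obtain f' where f': "\<forall>x\<in>I. (f has_real_derivative f' x) (at x within I)" "Cnorm_le lip m B f'"
      using a by (auto elim: Cnorm_le_SucE)
    have inv: "Cnorm_le lip m K (\<lambda>x. 1 / f x)" using K a Cnorm_le_Suc_imp by blast
    have "Cnorm_le lip m (\<bar>-1\<bar> * (2 ^ (m + 1) * (2 ^ (m + 1) * B * K) * K))
        (\<lambda>x. -1 * (f' x * (1 / f x) * (1 / f x)))"
      by (intro Cnorm_le_cmult Cnorm_le_mult f'(2) inv)
    then have deriv: "Cnorm_le lip m K' (\<lambda>x. -1 * (f' x * (1 / f x) * (1 / f x)))"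
      unfolding K'_def by (rule Cnorm_le_mono) simp
    show "Cnorm_le lip (Suc m) K' (\<lambda>x. 1 / f x)"
    proof (rule Cnorm_le_SucI[OF _ _ deriv])
      show "((\<lambda>x. 1 / f x) has_real_derivative -1 * (f' x * (1 / f x) * (1 / f x))) (at x within I)"
        if "x \<in> I" for x
        using DERIV_inverse_fun[of f "f' x" x I] bspec[OF f'(1) that] pos[OF that]
        by (simp add: inverse_eq_divide power2_eq_square)
      show "\<bar>1 / f x\<bar> \<le> K'" if "x \<in> I" for x
      proof -
        have "\<bar>1 / f x\<bar> \<le> 1 / c" using pos[OF that] assms by (simp add: divide_left_mono)
        then show ?thesis unfolding K'_def by simp
      qed
    qed
  qed
qed

definition derivI :: "(real \<Rightarrow> real) \<Rightarrow> real \<Rightarrow> real" where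
  "derivI f x = vector_derivative f (at x within I)"

lemma derivI_eq: "x \<in> I \<Longrightarrow> (f has_real_derivative d) (at x within I) \<Longrightarrow> derivI f x = d"
  unfolding derivI_def has_real_derivative_iff_has_vector_derivative
  by (rule vector_derivative_within_closed_interval) auto

lemma derivI_cong:
  assumes "x \<in> I" "\<And>y. y \<in> I \<Longrightarrow> f y = g y"
  shows "derivI f x = derivI g x"
proof -
  have "(f has_vector_derivative d) (at x within I) \<longleftrightarrow> (g has_vector_derivative d) (at x within I)" for d
    using has_vector_derivative_transform_within[of _ _ x I 1] assms by (metis zero_less_one)
  then show ?thesis unfolding derivI_def vector_derivative_def by simp
qed

lemma Cnorm_le_derivI:
  assumes "Cnorm_le lip (Suc m) B f"
  shows "Cnorm_le lip m B (derivI f)" and "x \<in> I \<Longrightarrow> (f has_real_derivative derivI f x) (at x within I)"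
proof -
  obtain f' where f': "\<forall>x\<in>I. (f has_real_derivative f' x) (at x within I)" "Cnorm_le lip m B f'"
    using assms by (rule Cnorm_le_SucE)
  have eq: "derivI f x = f' x" if "x \<in> I" for x using bspec[OF f'(1) that] that by (intro derivI_eq)
  show "Cnorm_le lip m B (derivI f)" by (rule Cnorm_le_cong[OF f'(2)]) (simp add: eq)
  show "x \<in> I \<Longrightarrow> (f has_real_derivative derivI f x) (at x within I)" using f'(1) eq by simp
qed

lemma Cnorm_le_derivI_pow: "Cnorm_le lip m B f \<Longrightarrow> j \<le> m \<Longrightarrow> Cnorm_le lip (m - j) B ((derivI ^^ j) f)"
proof (induction j)
  case (Suc j)
  then have "Cnorm_le lip (Suc (m - Suc j)) B ((derivI ^^ j) f)" by (simp add: Suc_diff_Suc)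
  then show ?case by (simp add: Cnorm_le_derivI(1))
qed simp

lemma derivI_pow_cong:
  "(\<And>y. y \<in> I \<Longrightarrow> f y = g y) \<Longrightarrow> x \<in> I \<Longrightarrow> (derivI ^^ j) f x = (derivI ^^ j) g x"
proof (induction j arbitrary: x)
  case (Suc j)
  show ?case using derivI_cong[OF Suc.prems(2) Suc.IH[OF Suc.prems(1)]] by simp
qed simp

lemma derivI_pow_linear:
  assumes "Cnorm_le lip m B1 f" "Cnorm_le lip m B2 g" "j \<le> m" "x \<in> I"
  shows "(derivI ^^ j) (\<lambda>x. a * f x + g x) x = a * (derivI ^^ j) f x + (derivI ^^ j) g x"
  using assms(3,4)
proof (induction j arbitrary: x)
  case (Suc j)
  have f: "Cnorm_le lip (Suc (m - Suc j)) B1 ((derivI ^^ j) f)"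
    using Cnorm_le_derivI_pow[OF assms(1)] Suc.prems by (metis Suc_diff_Suc Suc_le_lessD less_imp_le_nat)
  have g: "Cnorm_le lip (Suc (m - Suc j)) B2 ((derivI ^^ j) g)"
    using Cnorm_le_derivI_pow[OF assms(2)] Suc.prems by (metis Suc_diff_Suc Suc_le_lessD less_imp_le_nat)
  have "(derivI ^^ Suc j) (\<lambda>x. a * f x + g x) x
      = derivI (\<lambda>y. a * (derivI ^^ j) f y + (derivI ^^ j) g y) x"
    using derivI_cong[OF Suc.prems(2) Suc.IH] Suc.prems(1) by simp
  also have "\<dots> = a * derivI ((derivI ^^ j) f) x + derivI ((derivI ^^ j) g) x"
    using Cnorm_le_derivI(2)[OF f] Cnorm_le_derivI(2)[OF g] Suc.prems(2)
    by (intro derivI_eq) (auto intro!: derivative_eq_intros)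
  finally show ?case by simp
qed simp

text \<open>If \<open>u' = w \<circ> u\<close>, then \<open>(f \<circ> u)' = reparam_deriv w f \<circ> u\<close>.\<close>
definition reparam_deriv :: "(real \<Rightarrow> real) \<Rightarrow> (real \<Rightarrow> real) \<Rightarrow> real \<Rightarrow> real" where
  "reparam_deriv w f x = derivI f x * w x"

lemma reparam_deriv_pow_expansion:
  assumes "j \<le> m" and f: "Cnorm_le lip m B f" and r: "Cnorm_le lip m \<rho> r" "\<rho> \<le> 1"
    and w: "\<And>x. x \<in> I \<Longrightarrow> w x = 1/2 + r x"
  shows "\<exists>R. Cnorm_le lip (m - j) ((3 * 2 ^ (m + 1)) ^ j * B * \<rho>) R \<and>
    (\<forall>x\<in>I. (reparam_deriv w ^^ j) f x = (derivI ^^ j) f x / 2 ^ j + R x)"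
  using assms(1)
proof (induction j)
  case 0
  have "0 \<le> B * \<rho>" using f r Cnorm_le_nonneg by simp
  then show ?case by (intro exI[of _ "\<lambda>_. 0"]) (simp add: Cnorm_le_const)
next
  case (Suc j)
  define K where "K = (3 * 2 ^ (m + 1) :: real) ^ j"
  define n where "n = m - Suc j"
  have mj: "m - j = Suc n" using Suc.prems unfolding n_def by simp
  obtain R where R: "Cnorm_le lip (Suc n) (K * B * \<rho>) R"
    "\<forall>x\<in>I. (reparam_deriv w ^^ j) f x = (derivI ^^ j) f x / 2 ^ j + R x"
    using Suc mj unfolding K_def by auto
  define P where "P = (derivI ^^ j) f"
  have P: "Cnorm_le lip (Suc n) B P"
    unfolding P_def using Cnorm_le_derivI_pow[OF f, of j] Suc.prems mj by simp
  have B: "0 \<le> B" "0 \<le> \<rho>" using f r Cnorm_le_nonneg by blast+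
  have "(1 :: real) \<le> 2 ^ (m + 1)" by (rule one_le_power) simp
  then have K: "1 \<le> K" unfolding K_def by (intro one_le_power) linarith
  have rn: "Cnorm_le lip n \<rho> r" using r(1) by (rule Cnorm_le_order_mono) (simp add: n_def)
  have "Cnorm_le lip n (1/2) (\<lambda>_. 1/2)" by (rule Cnorm_le_const) simp
  from Cnorm_le_add[OF this rn] have wn: "Cnorm_le lip n 2 (\<lambda>x. 1/2 + r x)"
    by (rule Cnorm_le_mono) (use r(2) in simp)
  define R' where "R' x = 1 / 2 ^ j * (derivI P x * r x) + derivI R x * (1/2 + r x)" for x
  have "Cnorm_le lip n (\<bar>1 / 2 ^ j\<bar> * (2 ^ (n + 1) * B * \<rho>) + 2 ^ (n + 1) * (K * B * \<rho>) * 2) R'"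
    unfolding R'_def
    by (rule Cnorm_le_add[OF Cnorm_le_cmult[OF Cnorm_le_mult[OF Cnorm_le_derivI(1)[OF P] rn]]
          Cnorm_le_mult[OF Cnorm_le_derivI(1)[OF R(1)] wn]])
  moreover have "\<bar>1 / 2 ^ j\<bar> * (2 ^ (n + 1) * B * \<rho>) + 2 ^ (n + 1) * (K * B * \<rho>) * 2
      \<le> (3 * 2 ^ (m + 1)) ^ Suc j * B * \<rho>"
  proof -
    have "\<bar>1 / 2 ^ j\<bar> * (2 ^ (n + 1) * B * \<rho>) \<le> 2 ^ (n + 1) * B * \<rho>"
      using B by (intro mult_left_le_one_le) auto
    moreover have "(2 :: real) ^ (n + 1) * (1 + 2 * K) \<le> 2 ^ (m + 1) * (3 * K)"
      using K Suc.prems unfolding n_def by (intro mult_mono power_increasing) auto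
    then have "(2 :: real) ^ (n + 1) * (1 + 2 * K) * (B * \<rho>) \<le> 2 ^ (m + 1) * (3 * K) * (B * \<rho>)"
      using B by (intro mult_right_mono) auto
    ultimately show ?thesis unfolding K_def by (simp add: algebra_simps)
  qed
  ultimately have R': "Cnorm_le lip (m - Suc j) ((3 * 2 ^ (m + 1)) ^ Suc j * B * \<rho>) R'"
    unfolding n_def by (rule Cnorm_le_mono)
  have "(reparam_deriv w ^^ Suc j) f x = (derivI ^^ Suc j) f x / 2 ^ Suc j + R' x" if x: "x \<in> I" for x
  proof -
    have "(reparam_deriv w ^^ Suc j) f x = derivI ((reparam_deriv w ^^ j) f) x * w x"
      by (simp add: reparam_deriv_def)
    also have "derivI ((reparam_deriv w ^^ j) f) x = derivI (\<lambda>y. 1 / 2 ^ j * P y + R y) x"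
      using R(2) x by (intro derivI_cong) (auto simp: P_def)
    also have "\<dots> = 1 / 2 ^ j * derivI P x + derivI R x"
      using x Cnorm_le_derivI(2)[OF P] Cnorm_le_derivI(2)[OF R(1)]
      by (intro derivI_eq) (auto intro!: derivative_eq_intros)
    also have "w x = 1/2 + r x" using w[OF x] .
    finally show ?thesis unfolding R'_def P_def by (simp add: field_simps)
  qed
  with R' show ?case by blast
qed

section \<open>Calculus along graphs in the plane\<close>

lemma iter_partial_Nil [simp]: "iter_partial [] f = f"
  by (simp add: iter_partial_def)

lemma iter_partial_single [simp]: "iter_partial [b] f = partial b f"
  by (simp add: iter_partial_def)

lemma iter_partial_snoc: "iter_partial ds (partial b f) = iter_partial (ds @ [b]) f"
  by (simp add: iter_partial_def)

lemma Cm_on_partial: "Cm_on (Suc n) P U \<Longrightarrow> Cm_on n (partial b P) U"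
  unfolding Cm_on_def iter_partial_snoc by auto

lemma Cm_on_mono: "Cm_on m P U \<Longrightarrow> k \<le> m \<Longrightarrow> Cm_on k P U"
  unfolding Cm_on_def by auto

lemma Cm_on_continuous: "Cm_on n P U \<Longrightarrow> continuous_on U P"
  unfolding Cm_on_def by (metis iter_partial_Nil le0 list.size(3))

lemma has_real_derivative_partial:
  assumes "Cm_on (Suc n) P U" "p \<in> U"
  shows "((\<lambda>t. P (p + t *\<^sub>R coord_dir b)) has_real_derivative partial b P p) (at 0)"
proof -
  have "(\<lambda>t. iter_partial [] P (p + t *\<^sub>R coord_dir b)) differentiable (at 0)"
    using assms unfolding Cm_on_def by (metis length_0_conv zero_less_Suc)
  then show ?thesis unfolding partial_def using DERIV_deriv_iff_real_differentiable by auto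
qed

lemma has_real_derivative_partial_fst:
  assumes "Cm_on (Suc n) P U" "(a, b) \<in> U"
  shows "((\<lambda>x. P (x, b)) has_real_derivative partial False P (a, b)) (at a)"
proof -
  have "(\<lambda>t. P ((a, b) + t *\<^sub>R coord_dir False)) = (\<lambda>t. P (t + a, b))"
    by (auto simp: coord_dir_def add.commute)
  then show ?thesis
    using has_real_derivative_partial[OF assms, of False] DERIV_shift[of "\<lambda>x. P (x, b)" _ 0 a] by simp
qed

lemma has_real_derivative_partial_snd:
  assumes "Cm_on (Suc n) P U" "(a, b) \<in> U"
  shows "((\<lambda>y. P (a, y)) has_real_derivative partial True P (a, b)) (at b)"
proof -
  have "(\<lambda>t. P ((a, b) + t *\<^sub>R coord_dir True)) = (\<lambda>t. P (a, t + b))"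
    by (auto simp: coord_dir_def add.commute)
  then show ?thesis
    using has_real_derivative_partial[OF assms, of True] DERIV_shift[of "\<lambda>y. P (a, y)" _ 0 b] by simp
qed

lemma Cm_on_has_derivative:
  assumes C: "Cm_on (Suc n) P U" and U: "open U" and p: "p \<in> U"
  shows "(P has_derivative (\<lambda>v. partial False P p * fst v + partial True P p * snd v)) (at p)"
proof -
  obtain a b where ab: "p = (a, b)" by (cases p)
  obtain A B where AB: "open A" "open B" "(a, b) \<in> A \<times> B" "A \<times> B \<subseteq> U"
    using open_prod_elim[OF U, of "(a, b)"] p ab by metis
  obtain e where e: "e > 0" "ball b e \<subseteq> B" using AB(2,3) openE by blast
  have sub: "A \<times> ball b e \<subseteq> U" using AB e by auto
  have fx: "((\<lambda>x. P (x, b)) has_derivative (\<lambda>t. partial False P (a, b) * t)) (at a within A)"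
    using has_real_derivative_partial_fst[OF C, of a b] p ab
    by (auto simp: has_field_derivative_def intro: has_derivative_at_withinI)
  have fy: "((\<lambda>y. P (x, y)) has_derivative blinfun_apply (blinfun_mult_right (partial True P (x, y))))
      (at y within ball b e)" if "x \<in> A" "y \<in> ball b e" for x y
  proof -
    have "(x, y) \<in> U" using sub that by auto
    then have "((\<lambda>y. P (x, y)) has_derivative (*) (partial True P (x, y))) (at y)"
      using has_real_derivative_partial_snd[OF C, of x y] by (simp add: has_field_derivative_def)
    moreover have "blinfun_apply (blinfun_mult_right (partial True P (x, y))) = (*) (partial True P (x, y))"
      by (rule ext) simp
    ultimately show ?thesis by (simp add: has_derivative_at_withinI)
  qed
  have "continuous (at (a, b)) (partial True P)"
    using Cm_on_continuous[OF Cm_on_partial[OF C]] U p ab continuous_on_eq_continuous_at by blast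
  then have "continuous (at (a, b) within A \<times> ball b e) (\<lambda>q. blinfun_mult_right (partial True P q))"
    by (rule bounded_linear.continuous[OF bounded_linear_blinfun_mult_right,
        OF continuous_at_imp_continuous_within])
  then have fyc: "continuous (at (a, b) within A \<times> ball b e)
      (\<lambda>(x, y). blinfun_mult_right (partial True P (x, y)))"
    by (simp add: case_prod_beta')
  have "((\<lambda>(x, y). P (x, y)) has_derivative
      (\<lambda>(tx, ty). partial False P (a, b) * tx + blinfun_apply (blinfun_mult_right (partial True P (a, b))) ty))
      (at (a, b) within A \<times> ball b e)"
    using e(1) by (intro has_derivative_partialsI[OF fx fy fyc]) auto
  moreover have "at (a, b) within A \<times> ball b e = at (a, b)"
    using AB e by (intro at_within_open) (auto intro: open_Times)
  ultimately show ?thesis unfolding ab by (simp add: case_prod_beta')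
qed

lemma convex_unit_box: "convex unit_box"
proof -
  have "unit_box = cbox (-1, -1) (1, 1)" unfolding unit_box_def by (auto simp: cbox_Pair_eq)
  then show ?thesis using convex_box(1) by metis
qed

lemma unit_box_lipschitz:
  assumes C: "Cm_on (Suc n) P U" and U: "open U" "unit_box \<subseteq> U"
    and bound: "\<And>b p. p \<in> unit_box \<Longrightarrow> \<bar>partial b P p\<bar> \<le> \<beta>"
    and pq: "p \<in> unit_box" "q \<in> unit_box"
  shows "\<bar>P p - P q\<bar> \<le> 2 * \<beta> * norm (p - q)"
proof -
  have "norm (P p - P q) \<le> 2 * \<beta> * norm (p - q)"
  proof (rule differentiable_bound[OF convex_unit_box _ _ pq])
    fix x assume x: "x \<in> unit_box"
    show "(P has_derivative (\<lambda>v. partial False P x * fst v + partial True P x * snd v)) (at x within unit_box)"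
      using Cm_on_has_derivative[OF C U(1), of x] x U(2) by (auto intro: has_derivative_at_withinI)
    show "onorm (\<lambda>v. partial False P x * fst v + partial True P x * snd v) \<le> 2 * \<beta>"
    proof (rule onorm_le)
      fix v :: "real \<times> real"
      have "norm (partial False P x * fst v + partial True P x * snd v)
          \<le> \<bar>partial False P x\<bar> * \<bar>fst v\<bar> + \<bar>partial True P x\<bar> * \<bar>snd v\<bar>"
        by (simp add: abs_mult order_trans[OF abs_triangle_ineq])
      also have "\<dots> \<le> \<beta> * norm v + \<beta> * norm v"
        using bound[OF x, of False] bound[OF x, of True] norm_fst_le[of "fst v" "snd v"] norm_snd_le[of "snd v" "fst v"]
        by (intro add_mono mult_mono) auto
      finally show "norm (partial False P x * fst v + partial True P x * snd v) \<le> 2 * \<beta> * norm v"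
        by simp
    qed
  qed
  then show ?thesis by simp
qed

lemma graph_in_unit_box: "t \<in> I \<Longrightarrow> \<bar>F t\<bar> \<le> 1 \<Longrightarrow> (t, F t) \<in> unit_box"
  unfolding unit_box_def by auto

lemma has_real_derivative_along_graph:
  assumes C: "Cm_on (Suc n) P U" and U: "open U" "unit_box \<subseteq> U"
    and t: "t \<in> I" "\<bar>F t\<bar> \<le> 1" and F: "(F has_real_derivative F') (at t within I)"
  shows "((\<lambda>t. P (t, F t)) has_real_derivative partial False P (t, F t) + partial True P (t, F t) * F')
    (at t within I)"
proof -
  have "(t, F t) \<in> U" using graph_in_unit_box[of t F] t U(2) by auto
  moreover have "((\<lambda>t. (t, F t)) has_derivative (\<lambda>h. (h, F' * h))) (at t within I)"
    using F by (intro has_derivative_Pair has_derivative_ident) (simp add: has_field_derivative_def)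
  ultimately have "((\<lambda>t. P (t, F t)) has_derivative
      (\<lambda>h. partial False P (t, F t) * fst (h, F' * h) + partial True P (t, F t) * snd (h, F' * h)))
      (at t within I)"
    using has_derivative_compose[OF _ Cm_on_has_derivative[OF C U(1)]] by blast
  then show ?thesis unfolding has_field_derivative_def
    by (rule has_derivative_eq_rhs) (auto simp: algebra_simps)
qed

definition bounded_on_unit_box :: "nat \<Rightarrow> (real \<times> real \<Rightarrow> real) \<Rightarrow> real \<Rightarrow> real \<Rightarrow> bool" where
  "bounded_on_unit_box m P c \<beta> \<longleftrightarrow> (\<forall>p\<in>unit_box. \<bar>P p - c\<bar> \<le> \<beta>) \<and>
     (\<forall>ds. 1 \<le> length ds \<and> length ds \<le> m + 1 \<longrightarrow> (\<forall>p\<in>unit_box. \<bar>iter_partial ds P p\<bar> \<le> \<beta>))"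

lemma bounded_on_unit_box_nonneg:
  assumes "bounded_on_unit_box m P c \<beta>"
  shows "0 \<le> \<beta>"
proof -
  have "(0, 0) \<in> unit_box" unfolding unit_box_def by simp
  then have "\<bar>P (0, 0) - c\<bar> \<le> \<beta>" using assms unfolding bounded_on_unit_box_def by blast
  then show ?thesis by (meson abs_ge_zero order_trans)
qed

lemma bounded_on_unit_box_partial_bound:
  assumes "bounded_on_unit_box m P c \<beta>" "p \<in> unit_box"
  shows "\<bar>partial b P p\<bar> \<le> \<beta>"
proof -
  have "\<forall>p\<in>unit_box. \<bar>iter_partial [b] P p\<bar> \<le> \<beta>"
    using assms(1) unfolding bounded_on_unit_box_def by (auto dest: spec[of _ "[b]"])
  with assms(2) show ?thesis by simp
qed

lemma bounded_on_unit_box_partial: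
  assumes "bounded_on_unit_box (Suc m) P c \<beta>"
  shows "bounded_on_unit_box m (partial b P) 0 \<beta>"
  unfolding bounded_on_unit_box_def
proof (intro conjI allI impI ballI)
  show "\<bar>partial b P p - 0\<bar> \<le> \<beta>" if "p \<in> unit_box" for p
    using bounded_on_unit_box_partial_bound[OF assms that] by simp
  show "\<bar>iter_partial ds (partial b P) p\<bar> \<le> \<beta>"
    if "1 \<le> length ds \<and> length ds \<le> m + 1" "p \<in> unit_box" for ds p
    using assms that unfolding bounded_on_unit_box_def iter_partial_snoc
    by (auto dest: spec[of _ "ds @ [b]"])
qed

lemma Cnorm_le_0_along_graph:
  assumes U: "open U" "unit_box \<subseteq> U" and C: "Cm_on 1 P U" and P: "bounded_on_unit_box 0 P c \<beta>"
    and F: "Cnorm_le lip 0 1 F"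
  shows "Cnorm_le lip 0 (4 * \<beta>) (\<lambda>t. P (t, F t) - c)"
  unfolding Cnorm_le.simps(1)
proof (intro conjI ballI impI)
  have graph: "(t, F t) \<in> unit_box" if "t \<in> I" for t using F that graph_in_unit_box by simp
  have "0 \<le> \<beta>" using bounded_on_unit_box_nonneg[OF P] .
  have "continuous_on I (\<lambda>t. (t, F t))" using F by (intro continuous_intros) simp
  moreover have "(\<lambda>t. (t, F t)) ` I \<subseteq> U" using graph U by auto
  ultimately have "continuous_on I (\<lambda>t. P (t, F t))"
    using continuous_on_compose2[OF Cm_on_continuous[OF C], of I "\<lambda>t. (t, F t)"] by blast
  then show "continuous_on I (\<lambda>t. P (t, F t) - c)" by (intro continuous_intros)
  show "\<bar>P (t, F t) - c\<bar> \<le> 4 * \<beta>" if "t \<in> I" for t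
    using P graph[OF that] \<open>0 \<le> \<beta>\<close> unfolding bounded_on_unit_box_def by force
  show "\<bar>P (x, F x) - c - (P (y, F y) - c)\<bar> \<le> 4 * \<beta> * \<bar>x - y\<bar>" if lip "x \<in> I" "y \<in> I" for x y
  proof -
    have "\<bar>P (x, F x) - P (y, F y)\<bar> \<le> 2 * \<beta> * norm ((x, F x) - (y, F y))"
      by (rule unit_box_lipschitz[of 0 P U, OF _ U bounded_on_unit_box_partial_bound[OF P]])
        (use C graph that in simp_all)
    also have "norm ((x, F x) - (y, F y)) \<le> \<bar>x - y\<bar> + \<bar>F x - F y\<bar>"
      using norm_Pair_le[of "x - y" "F x - F y"] by simp
    also have "\<bar>F x - F y\<bar> \<le> \<bar>x - y\<bar>" using F that by auto
    finally show ?thesis using \<open>0 \<le> \<beta>\<close> by (simp add: mult_left_mono)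
  qed
qed

lemma Cnorm_le_along_graph:
  "\<exists>K>0. \<forall>P c \<beta> F U. open U \<and> unit_box \<subseteq> U \<and> Cm_on (m + 1) P U \<and> bounded_on_unit_box m P c \<beta> \<and>
     Cnorm_le lip m 1 F \<longrightarrow> Cnorm_le lip m (K * \<beta>) (\<lambda>t. P (t, F t) - c)"
proof (induction m)
  case 0
  show ?case
  proof (intro exI[of _ 4] conjI allI impI)
    fix P c \<beta> F U
    assume "open U \<and> unit_box \<subseteq> U \<and> Cm_on (0 + 1) P U \<and> bounded_on_unit_box 0 P c \<beta> \<and>
      Cnorm_le lip 0 1 F"
    then show "Cnorm_le lip 0 (4 * \<beta>) (\<lambda>t. P (t, F t) - c)"
      using Cnorm_le_0_along_graph[of U P c \<beta> lip F] by simp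
  qed simp
next
  case (Suc m)
  then obtain K where K: "K > 0" "\<forall>P c \<beta> F U. open U \<and> unit_box \<subseteq> U \<and> Cm_on (m + 1) P U \<and>
      bounded_on_unit_box m P c \<beta> \<and> Cnorm_le lip m 1 F \<longrightarrow> Cnorm_le lip m (K * \<beta>) (\<lambda>t. P (t, F t) - c)"
    by blast
  define K' where "K' = 1 + K + 2 ^ (m + 1) * K"
  have "0 < K'" using K unfolding K'_def by (simp add: add_pos_pos)
  moreover have "Cnorm_le lip (Suc m) (K' * \<beta>) (\<lambda>t. P (t, F t) - c)"
    if U: "open U" "unit_box \<subseteq> U" and C: "Cm_on (Suc m + 1) P U" and P: "bounded_on_unit_box (Suc m) P c \<beta>"
      and F: "Cnorm_le lip (Suc m) 1 F" for P c \<beta> F U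
  proof (rule Cnorm_le_SucI)
    have "0 \<le> \<beta>" using bounded_on_unit_box_nonneg[OF P] .
    have partials: "Cnorm_le lip m (K * \<beta>) (\<lambda>t. partial b P (t, F t) - 0)" for b
      by (rule K(2)[rule_format, where P = "partial b P" and c = 0 and U = U])
        (use U Cm_on_partial[OF C[unfolded Suc_eq_plus1[symmetric]]] bounded_on_unit_box_partial[OF P]
          Cnorm_le_Suc_imp[OF F] in auto)
    have "Cnorm_le lip m (K * \<beta> + 2 ^ (m + 1) * (K * \<beta>) * 1)
        (\<lambda>t. (partial False P (t, F t) - 0) + (partial True P (t, F t) - 0) * derivI F t)"
      by (rule Cnorm_le_add[OF partials Cnorm_le_mult[OF partials Cnorm_le_derivI(1)[OF F]]])
    then show "Cnorm_le lip m (K' * \<beta>)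
        (\<lambda>t. (partial False P (t, F t) - 0) + (partial True P (t, F t) - 0) * derivI F t)"
      by (rule Cnorm_le_mono) (use \<open>0 \<le> \<beta>\<close> in \<open>simp add: K'_def algebra_simps\<close>)
    show "((\<lambda>t. P (t, F t) - c) has_real_derivative
        (partial False P (t, F t) - 0) + (partial True P (t, F t) - 0) * derivI F t) (at t within I)"
      if "t \<in> I" for t
      using has_real_derivative_along_graph[OF _ U that Cnorm_le_bound[OF F that]
          Cnorm_le_derivI(2)[OF F that]] C
      by (auto intro!: derivative_eq_intros)
    show "\<bar>P (t, F t) - c\<bar> \<le> K' * \<beta>" if "t \<in> I" for t
    proof -
      have "1 \<le> K'" using K unfolding K'_def by (simp add: add_nonneg_pos)
      then have "\<beta> \<le> K' * \<beta>" using \<open>0 \<le> \<beta>\<close> by (simp add: mult_le_cancel_right1)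
      moreover have "(t, F t) \<in> unit_box" using Cnorm_le_bound[OF F that] that graph_in_unit_box by blast
      ultimately show ?thesis using P unfolding bounded_on_unit_box_def by force
    qed
  qed
  ultimately show ?case by blast
qed

section \<open>Seminorms and inverses of expanding maps\<close>

lemma Ck_interval_Cnorm_le:
  assumes F: "Ck_interval k F DF" and bound: "\<forall>j\<le>k. \<forall>x\<in>I. \<bar>DF j x\<bar> \<le> 1"
    and lip: "lip \<longrightarrow> (\<forall>x\<in>I. \<forall>y\<in>I. \<bar>DF k x - DF k y\<bar> \<le> \<bar>x - y\<bar>)" and "i \<le> k"
  shows "Cnorm_le lip (k - i) 1 (DF i)"
proof -
  have "Cnorm_le lip n 1 (DF (k - n))" if "n \<le> k" for n
    using that
  proof (induction n)
    case 0
    then show ?case using F bound lip unfolding Ck_interval_def by simp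
  next
    case (Suc n)
    have "k - Suc n < k" "Suc (k - Suc n) = k - n" using Suc.prems by auto
    then have "(DF (k - Suc n) has_real_derivative DF (k - n) x) (at x within I)" if "x \<in> I" for x
      using F that unfolding Ck_interval_def by metis
    with Suc bound show ?case by (intro Cnorm_le_SucI[where f' = "DF (k - n)"]) auto
  qed
  from this[of "k - i"] show ?thesis using assms(4) by simp
qed

lemma derivI_pow_Ck_interval:
  "Ck_interval k F DF \<Longrightarrow> i + j \<le> k \<Longrightarrow> x \<in> I \<Longrightarrow> (derivI ^^ j) (DF i) x = DF (i + j) x"
proof (induction j arbitrary: x)
  case (Suc j)
  have "(derivI ^^ Suc j) (DF i) x = derivI (DF (i + j)) x"
    using derivI_cong[OF Suc.prems(3), of "(derivI ^^ j) (DF i)" "DF (i + j)"] Suc by simp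
  also have "\<dots> = DF (i + Suc j) x"
    using Suc.prems unfolding Ck_interval_def by (intro derivI_eq) auto
  finally show ?case .
qed simp

lemma Ck_seminorm_upper:
  assumes "\<forall>j\<le>k. continuous_on I (D j)" "1 \<le> j" "j \<le> k" "x \<in> I"
  shows "\<bar>D j x\<bar> \<le> Ck_seminorm k D"
proof -
  have "(\<lambda>(j, x). \<bar>D j x\<bar>) ` ({1..k} \<times> I) = (\<Union>j\<in>{1..k}. (\<lambda>x. \<bar>D j x\<bar>) ` I)" by auto
  moreover have "bdd_above ((\<lambda>x. \<bar>D j x\<bar>) ` I)" if "j \<in> {1..k}" for j
    using assms(1) that
    by (intro bounded_imp_bdd_above compact_imp_bounded compact_continuous_image continuous_intros) auto
  ultimately have "bdd_above ((\<lambda>(j, x). \<bar>D j x\<bar>) ` ({1..k} \<times> I))" by simp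
  moreover have "\<bar>D j x\<bar> \<in> (\<lambda>(j, x). \<bar>D j x\<bar>) ` ({1..k} \<times> I)" using assms by force
  ultimately show ?thesis unfolding Ck_seminorm_def by (rule cSup_upper[rotated])
qed

lemma Ck_seminorm_least:
  assumes "1 \<le> k" "\<And>j x. 1 \<le> j \<Longrightarrow> j \<le> k \<Longrightarrow> x \<in> I \<Longrightarrow> \<bar>D j x\<bar> \<le> M"
  shows "Ck_seminorm k D \<le> M"
  unfolding Ck_seminorm_def using assms by (intro cSup_least) auto

lemma Ck_interval_bounded:
  assumes F: "Ck_interval k F DF" and "1 \<le> k" "F 0 = 0" "Ck_seminorm k DF \<le> 1"
  shows "\<forall>j\<le>k. \<forall>x\<in>I. \<bar>DF j x\<bar> \<le> 1"
proof (intro allI impI ballI)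
  fix j x assume j: "j \<le> k" and x: "x \<in> I"
  have cont: "\<forall>j\<le>k. continuous_on I (DF j)" using F unfolding Ck_interval_def by blast
  have higher: "\<bar>DF j x\<bar> \<le> 1" if "1 \<le> j" "j \<le> k" "x \<in> I" for j x
    using Ck_seminorm_upper[OF cont that] assms(4) by simp
  show "\<bar>DF j x\<bar> \<le> 1"
  proof (cases "j = 0")
    case True
    have F0: "DF 0 = F" and "\<forall>t\<in>I. (DF 0 has_real_derivative DF (Suc 0) t) (at t within I)"
      using F \<open>1 \<le> k\<close> unfolding Ck_interval_def by auto
    then have "\<bar>F x - F 0\<bar> \<le> 1 * \<bar>x - 0\<bar>"
      using lipschitz_of_deriv_bound[of F "DF 1" 1 x 0] higher[of 1] \<open>1 \<le> k\<close> x by simp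
    moreover have "\<bar>x\<bar> \<le> 1" using x by auto
    ultimately show ?thesis using True F0 \<open>F 0 = 0\<close> by simp
  qed (use higher j x in simp)
qed

lemma Lip_seminorm_upper:
  assumes "\<forall>x\<in>I. \<forall>y\<in>I. \<bar>D k x - D k y\<bar> \<le> M * \<bar>x - y\<bar>" "x \<in> I" "y \<in> I"
  shows "\<bar>D k x - D k y\<bar> \<le> Lip_seminorm k D * \<bar>x - y\<bar>"
proof (cases "x = y")
  case False
  have "bdd_above {\<bar>D k x - D k y\<bar> / \<bar>x - y\<bar> | x y. x \<in> I \<and> y \<in> I \<and> x \<noteq> y}"
    using assms(1) by (intro bdd_aboveI[of _ M]) (auto simp: divide_le_eq)
  moreover have "\<bar>D k x - D k y\<bar> / \<bar>x - y\<bar> \<in> {\<bar>D k x - D k y\<bar> / \<bar>x - y\<bar> | x y. x \<in> I \<and> y \<in> I \<and> x \<noteq> y}"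
    using assms False by blast
  ultimately have "\<bar>D k x - D k y\<bar> / \<bar>x - y\<bar> \<le> Lip_seminorm k D"
    unfolding Lip_seminorm_def by (rule cSup_upper[rotated])
  then show ?thesis using False by (simp add: divide_le_eq)
qed simp

lemma Lip_seminorm_nonneg:
  assumes "\<forall>x\<in>I. \<forall>y\<in>I. \<bar>D k x - D k y\<bar> \<le> M * \<bar>x - y\<bar>"
  shows "0 \<le> Lip_seminorm k D"
  using Lip_seminorm_upper[where D = D and k = k, OF assms, of 1 "-1"] by simp

lemma Lip_seminorm_least:
  assumes "\<And>x y. x \<in> I \<Longrightarrow> y \<in> I \<Longrightarrow> x \<noteq> y \<Longrightarrow> \<bar>D k x - D k y\<bar> / \<bar>x - y\<bar> \<le> M"
  shows "Lip_seminorm k D \<le> M"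
  unfolding Lip_seminorm_def
proof (rule cSup_least)
  have "\<bar>D k 1 - D k (-1)\<bar> / \<bar>1 - (-1)\<bar> \<in> {\<bar>D k x - D k y\<bar> / \<bar>x - y\<bar> | x y. x \<in> I \<and> y \<in> I \<and> x \<noteq> y}"
    by (intro CollectI exI[of _ 1] exI[of _ "-1"]) auto
  then show "{\<bar>D k x - D k y\<bar> / \<bar>x - y\<bar> | x y. x \<in> I \<and> y \<in> I \<and> x \<noteq> y} \<noteq> {}" by blast
qed (use assms in auto)

lemma diff_ge_of_deriv_ge:
  assumes deriv: "\<And>t. t \<in> I \<Longrightarrow> (g has_real_derivative g' t) (at t within I)"
    and lower: "\<And>t. t \<in> I \<Longrightarrow> c \<le> g' t" and "s \<in> I" "t \<in> I" "s \<le> t"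
  shows "c * (t - s) \<le> g t - g s"
proof (cases "s = t")
  case False
  then have "s < t" using assms by simp
  then obtain x where x: "x \<in> {s<..<t}" "g t - g s = g' x * (t - s)"
  proof (rule mvt_simple[THEN bexE])
    fix x assume "s \<le> x" "x \<le> t"
    then have "x \<in> I" using assms by auto
    then have "(g has_real_derivative g' x) (at x within {s..t})"
      using deriv has_field_derivative_subset[of g "g' x" x I "{s..t}"] assms by auto
    then show "(g has_derivative (*) (g' x)) (at x within {s..t})"
      by (simp add: has_field_derivative_def mult_commute_abs)
  qed auto
  then have "x \<in> I" using assms by auto
  then show ?thesis using x lower[of x] \<open>s < t\<close> by (simp add: mult_right_mono)
qed simp

lemma expanding_map_inj_on_bounds:
  assumes deriv: "\<And>t. t \<in> I \<Longrightarrow> (g has_real_derivative g' t) (at t within I)"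
    and lower: "\<And>t. t \<in> I \<Longrightarrow> 3/2 \<le> g' t" and g0: "g 0 = 0"
  shows "inj_on g I" and "\<And>t. t \<in> I \<Longrightarrow> \<bar>t\<bar> \<le> 2/3 * \<bar>g t\<bar>" and "3/2 \<le> g 1" "g (-1) \<le> -3/2"
proof -
  have mono: "3/2 * (t - s) \<le> g t - g s" if "s \<in> I" "t \<in> I" "s \<le> t" for s t
    using diff_ge_of_deriv_ge[OF deriv lower that] .
  show "inj_on g I"
  proof (rule inj_onI)
    fix s t assume st: "s \<in> I" "t \<in> I" "g s = g t"
    show "s = t"
    proof (cases "s \<le> t")
      case True
      then show ?thesis using mono[OF st(1,2) True] st(3) by simp
    next
      case False
      then show ?thesis using mono[OF st(2,1)] st(3) by simp
    qed
  qed
  show "\<bar>t\<bar> \<le> 2/3 * \<bar>g t\<bar>" if "t \<in> I" for t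
  proof -
    have zero: "(0::real) \<in> I" by simp
    show ?thesis
    proof (cases "0 \<le> t")
      case True
      then have "3/2 * t \<le> g t" using mono[OF zero that] g0 by simp
      moreover from this True have "0 \<le> g t" by linarith
      ultimately show ?thesis using True by simp
    next
      case False
      then have "3/2 * (- t) \<le> - g t" using mono[OF that zero] g0 by simp
      moreover from this False have "g t \<le> 0" by linarith
      ultimately show ?thesis using False by simp
    qed
  qed
  show "3/2 \<le> g 1" "g (-1) \<le> -3/2" using mono[of 0 1] mono[of "-1" 0] g0 by auto
qed

lemma inverse_of_expanding_map:
  assumes deriv: "\<And>t. t \<in> I \<Longrightarrow> (g has_real_derivative g' t) (at t within I)"
    and lower: "\<And>t. t \<in> I \<Longrightarrow> 3/2 \<le> g' t" and g0: "g 0 = 0"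
  obtains u where "\<And>x. x \<in> I \<Longrightarrow> u x \<in> {-2/3..2/3} \<and> g (u x) = x"
    "\<And>t. t \<in> I \<Longrightarrow> \<bar>g t\<bar> \<le> 1 \<Longrightarrow> u (g t) = t"
    "\<And>x. x \<in> I \<Longrightarrow> (u has_real_derivative inverse (g' (u x))) (at x within I)"
proof -
  note inj = expanding_map_inj_on_bounds(1)[OF deriv lower g0]
    and small = expanding_map_inj_on_bounds(2)[OF deriv lower g0]
    and ends = expanding_map_inj_on_bounds(3,4)[OF deriv lower g0]
  have cont: "continuous_on I g" using deriv by (rule DERIV_continuous_on)
  define u where "u y = (THE t. t \<in> I \<and> g t = y)" for y
  have ug: "u (g t) = t" if "t \<in> I" for t
    unfolding u_def using that inj by (intro the_equality) (auto dest: inj_onD)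
  have gu: "u y \<in> I \<and> g (u y) = y" if y: "g (-1) \<le> y" "y \<le> g 1" for y
  proof -
    obtain t where "t \<in> I" "g t = y" using IVT'[of g "-1" y 1] y cont by auto
    then show ?thesis using ug by auto
  qed
  have u_range: "u x \<in> {-2/3..2/3} \<and> g (u x) = x" if "x \<in> I" for x
    using gu[of x] small[of "u x"] that ends by auto
  have "continuous_on (g ` I) u" using continuous_on_inv[OF cont compact_Icc] ug by blast
  moreover have "{g (-1)..g 1} \<subseteq> g ` I" using gu by (metis atLeastAtMost_iff image_eqI subsetI)
  ultimately have u_cont: "continuous_on {g (-1)..g 1} u" by (rule continuous_on_subset)
  have "(u has_real_derivative inverse (g' (u x))) (at x within I)" if x: "x \<in> I" for x
  proof -
    have ux: "u x \<in> {-2/3..2/3}" "g (u x) = x" using u_range x by auto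
    have "at (u x) within I = at (u x)" using ux by (intro at_within_Icc_at) auto
    then have "DERIV g (u x) :> g' (u x)" using deriv[of "u x"] ux by auto
    moreover have "g' (u x) \<noteq> 0" using lower[of "u x"] ux by auto
    moreover have "g (-1) < x" "x < g 1" using x ends by auto
    moreover have "\<And>y. g (-1) < y \<Longrightarrow> y < g 1 \<Longrightarrow> g (u y) = y" using gu by simp
    moreover have "isCont u x" using continuous_on_interior[OF u_cont] x ends by auto
    ultimately have "DERIV u x :> inverse (g' (u x))" by (rule DERIV_inverse_function)
    then show ?thesis by (rule has_field_derivative_at_within)
  qed
  with that u_range ug show thesis by blast
qed

section \<open>The graph transform\<close>

lemma Cnorm_le_quotient_expansion:
  "\<exists>C>0. \<forall>E1 E2 f \<epsilon>. Cnorm_le lip m \<epsilon> E1 \<and> Cnorm_le lip m \<epsilon> E2 \<and> Cnorm_le lip m 1 f \<and> \<epsilon> \<le> 1/2 \<longrightarrow>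
     Cnorm_le lip m (C * \<epsilon>) (\<lambda>t. 1 / (2 + E1 t) - 1/2) \<and>
     Cnorm_le lip m (C * \<epsilon>) (\<lambda>t. (f t / 2 + E2 t) / (2 + E1 t) - f t / 4)"
proof -
  obtain K0 where K0: "\<And>g. Cnorm_le lip m 3 g \<Longrightarrow> \<forall>x\<in>I. 1 \<le> g x \<Longrightarrow> Cnorm_le lip m K0 (\<lambda>x. 1 / g x)"
    using Cnorm_le_inverse[of 1 lip m 3] by auto
  define K where "K = max K0 1"
  have K: "0 < K" unfolding K_def by simp
  define cr where "cr = 2 ^ (m + 1) * K / 2"
  define cS where "cS = 2 ^ (m + 1) * cr / 2 + 2 ^ (m + 1) * K"
  have cr: "0 < cr" and cS: "cr \<le> cS" unfolding cr_def cS_def using K by simp_all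
  show ?thesis
  proof (intro exI[of _ cS] conjI allI impI)
    show "0 < cS" using cr cS by simp
    fix E1 E2 f \<epsilon>
    assume a: "Cnorm_le lip m \<epsilon> E1 \<and> Cnorm_le lip m \<epsilon> E2 \<and> Cnorm_le lip m 1 f \<and> \<epsilon> \<le> 1/2"
    then have E1: "Cnorm_le lip m \<epsilon> E1" and E2: "Cnorm_le lip m \<epsilon> E2" and f: "Cnorm_le lip m 1 f"
      and "\<epsilon> \<le> 1/2" by auto
    have "0 \<le> \<epsilon>" using E1 Cnorm_le_nonneg by blast
    have E1_small: "\<bar>E1 t\<bar> \<le> 1/2" if "t \<in> I" for t
      using Cnorm_le_bound[OF E1 that] \<open>\<epsilon> \<le> 1/2\<close> by simp
    have "Cnorm_le lip m 2 (\<lambda>_. 2)" by (rule Cnorm_le_const) simp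
    from Cnorm_le_add[OF this E1] have "Cnorm_le lip m 3 (\<lambda>t. 2 + E1 t)"
      by (rule Cnorm_le_mono) (use \<open>\<epsilon> \<le> 1/2\<close> in simp)
    moreover have "\<forall>t\<in>I. 1 \<le> 2 + E1 t" using E1_small by force
    ultimately have "Cnorm_le lip m K0 (\<lambda>t. 1 / (2 + E1 t))" by (rule K0)
    then have w: "Cnorm_le lip m K (\<lambda>t. 1 / (2 + E1 t))"
      by (rule Cnorm_le_mono) (simp add: K_def)
    have "Cnorm_le lip m (\<bar>-1/2\<bar> * (2 ^ (m + 1) * \<epsilon> * K)) (\<lambda>t. -1/2 * (E1 t * (1 / (2 + E1 t))))"
      by (rule Cnorm_le_cmult[OF Cnorm_le_mult[OF E1 w]])
    then have r: "Cnorm_le lip m (cr * \<epsilon>) (\<lambda>t. 1 / (2 + E1 t) - 1/2)"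
    proof (rule Cnorm_le_cong[OF Cnorm_le_mono])
      show "\<bar>-1/2\<bar> * (2 ^ (m + 1) * \<epsilon> * K) \<le> cr * \<epsilon>" unfolding cr_def by simp
      show "-1/2 * (E1 t * (1 / (2 + E1 t))) = 1 / (2 + E1 t) - 1/2" if "t \<in> I" for t
        using E1_small[OF that] by (simp add: field_simps)
    qed
    show "Cnorm_le lip m (cS * \<epsilon>) (\<lambda>t. 1 / (2 + E1 t) - 1/2)"
      using r by (rule Cnorm_le_mono) (use cS \<open>0 \<le> \<epsilon>\<close> in \<open>simp add: mult_right_mono\<close>)
    have "Cnorm_le lip m (\<bar>1/2\<bar> * (2 ^ (m + 1) * 1 * (cr * \<epsilon>)) + 2 ^ (m + 1) * \<epsilon> * K)
        (\<lambda>t. 1/2 * (f t * (1 / (2 + E1 t) - 1/2)) + E2 t * (1 / (2 + E1 t)))"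
      by (rule Cnorm_le_add[OF Cnorm_le_cmult[OF Cnorm_le_mult[OF f r]] Cnorm_le_mult[OF E2 w]])
    then show "Cnorm_le lip m (cS * \<epsilon>) (\<lambda>t. (f t / 2 + E2 t) / (2 + E1 t) - f t / 4)"
    proof (rule Cnorm_le_cong[OF Cnorm_le_mono])
      show "\<bar>1/2\<bar> * (2 ^ (m + 1) * 1 * (cr * \<epsilon>)) + 2 ^ (m + 1) * \<epsilon> * K \<le> cS * \<epsilon>"
        unfolding cS_def by (simp add: algebra_simps)
      show "1/2 * (f t * (1 / (2 + E1 t) - 1/2)) + E2 t * (1 / (2 + E1 t))
          = (f t / 2 + E2 t) / (2 + E1 t) - f t / 4" if "t \<in> I" for t
      proof -
        have "1/2 * (a * (1 / d - 1/2)) + b * (1 / d) = (a / 2 + b) / d - a / 4" if "d \<noteq> 0"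
          for a b d :: real
          using that by (simp add: field_simps)
        moreover have "2 + E1 t \<noteq> 0" using E1_small[OF that] by auto
        ultimately show ?thesis by blast
      qed
    qed
  qed
qed

lemma reparam_deriv_pow_expansion_of_slope:
  assumes k: "k = Suc m" and F: "Ck_interval k F DF" "\<forall>j\<le>k. \<forall>x\<in>I. \<bar>DF j x\<bar> \<le> 1"
    "lip \<longrightarrow> (\<forall>x\<in>I. \<forall>y\<in>I. \<bar>DF k x - DF k y\<bar> \<le> \<bar>x - y\<bar>)"
    and r: "Cnorm_le lip m \<epsilon> r" and S: "Cnorm_le lip m \<epsilon> S" and "\<epsilon> \<le> 1"
    and w: "\<And>t. t \<in> I \<Longrightarrow> w t = 1/2 + r t" and f1: "\<And>t. t \<in> I \<Longrightarrow> f1 t = DF 1 t / 4 + S t"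
    and i: "1 \<le> i" "i \<le> k"
  shows "\<exists>Rem. Cnorm_le lip (k - i) ((1 + 2 * (3 * 2 ^ k) ^ m) * \<epsilon>) Rem \<and>
    (\<forall>t\<in>I. (reparam_deriv w ^^ (i - 1)) f1 t = DF i t / 2 ^ (i + 1) + Rem t)"
proof -
  define j where "j = i - 1"
  have j: "j \<le> m" "i = Suc j" "k - i = m - j" using i k unfolding j_def by auto
  have "0 \<le> \<epsilon>" using r Cnorm_le_nonneg by blast
  have DF1: "Cnorm_le lip m 1 (DF 1)" using Ck_interval_Cnorm_le[OF F, of 1] k by simp
  have "Cnorm_le lip m (\<bar>1/4\<bar> * 1 + \<epsilon>) (\<lambda>t. 1/4 * DF 1 t + S t)"
    by (rule Cnorm_le_add[OF Cnorm_le_cmult[OF DF1] S])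
  then have f1C: "Cnorm_le lip m 2 f1"
    by (rule Cnorm_le_cong[OF Cnorm_le_mono]) (use \<open>\<epsilon> \<le> 1\<close> f1 in auto)
  obtain R where R: "Cnorm_le lip (m - j) ((3 * 2 ^ (m + 1)) ^ j * 2 * \<epsilon>) R"
    "\<forall>x\<in>I. (reparam_deriv w ^^ j) f1 x = (derivI ^^ j) f1 x / 2 ^ j + R x"
    using reparam_deriv_pow_expansion[OF j(1) f1C r _ w] \<open>\<epsilon> \<le> 1\<close> by blast
  have "(1 :: real) \<le> 2 ^ k" by (rule one_le_power) simp
  then have "(1 :: real) \<le> 3 * 2 ^ k" by linarith
  then have "(3 * 2 ^ k :: real) ^ j \<le> (3 * 2 ^ k) ^ m"
    using j(1) by (rule power_increasing[rotated])
  then have "(3 * 2 ^ (m + 1) :: real) ^ j \<le> (3 * 2 ^ k) ^ m" using k by simp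
  then have "(3 * 2 ^ (m + 1)) ^ j * 2 * \<epsilon> \<le> 2 * (3 * 2 ^ k) ^ m * \<epsilon>"
    using \<open>0 \<le> \<epsilon>\<close> by (simp add: mult_right_mono)
  with R(1) have R': "Cnorm_le lip (m - j) (2 * (3 * 2 ^ k) ^ m * \<epsilon>) R" by (rule Cnorm_le_mono)
  define Rem where "Rem t = 1 / 2 ^ j * (derivI ^^ j) S t + R t" for t
  have "Cnorm_le lip (m - j) (\<bar>1 / 2 ^ j\<bar> * \<epsilon> + 2 * (3 * 2 ^ k) ^ m * \<epsilon>) Rem"
    unfolding Rem_def by (rule Cnorm_le_add[OF Cnorm_le_cmult[OF Cnorm_le_derivI_pow[OF S j(1)]] R'])
  then have RemC: "Cnorm_le lip (k - i) ((1 + 2 * (3 * 2 ^ k) ^ m) * \<epsilon>) Rem"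
    unfolding j(3)
  proof (rule Cnorm_le_mono)
    have "\<bar>1 / 2 ^ j\<bar> * \<epsilon> \<le> \<epsilon>" using \<open>0 \<le> \<epsilon>\<close> by (intro mult_left_le_one_le) auto
    then show "\<bar>1 / 2 ^ j\<bar> * \<epsilon> + 2 * (3 * 2 ^ k) ^ m * \<epsilon> \<le> (1 + 2 * (3 * 2 ^ k) ^ m) * \<epsilon>"
      by (simp add: algebra_simps)
  qed
  have "(reparam_deriv w ^^ (i - 1)) f1 t = DF i t / 2 ^ (i + 1) + Rem t" if t: "t \<in> I" for t
  proof -
    have "(derivI ^^ j) f1 t = (derivI ^^ j) (\<lambda>t. 1/4 * DF 1 t + S t) t"
      using f1 t by (intro derivI_pow_cong) simp_all
    also have "\<dots> = 1/4 * (derivI ^^ j) (DF 1) t + (derivI ^^ j) S t"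
      by (rule derivI_pow_linear[OF DF1 S j(1) t])
    also have "(derivI ^^ j) (DF 1) t = DF i t"
      using derivI_pow_Ck_interval[OF F(1) _ t, of 1 j] j k by simp
    finally show ?thesis using R(2) t unfolding Rem_def j_def[symmetric] j(2) by (simp add: field_simps)
  qed
  with RemC show ?thesis by blast
qed

definition saddle_perturbation ::
    "nat \<Rightarrow> (real \<times> real) set \<Rightarrow> (real \<times> real \<Rightarrow> real \<times> real) \<Rightarrow> real \<Rightarrow> bool" where
  "saddle_perturbation k U \<phi> \<delta> \<longleftrightarrow> open U \<and> unit_box \<subseteq> U \<and>
     Cm_on (k + 1) (fst \<circ> \<phi>) U \<and> Cm_on (k + 1) (snd \<circ> \<phi>) U \<and>
     \<phi> (0, 0) = (0, 0) \<and> (\<phi> has_derivative (\<lambda>(x1, x2). (2 * x1, x2 / 2))) (at (0, 0)) \<and>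
     (\<forall>ds. 2 \<le> length ds \<and> length ds \<le> k + 1 \<longrightarrow>
        (\<forall>p\<in>U. \<bar>iter_partial ds (fst \<circ> \<phi>) p\<bar> \<le> \<delta> \<and> \<bar>iter_partial ds (snd \<circ> \<phi>) p\<bar> \<le> \<delta>)) \<and>
     0 < \<delta>"

lemma saddle_perturbation_partials_origin:
  assumes "saddle_perturbation k U \<phi> \<delta>"
  shows "partial False (fst \<circ> \<phi>) (0, 0) = 2" "partial True (fst \<circ> \<phi>) (0, 0) = 0"
    "partial False (snd \<circ> \<phi>) (0, 0) = 0" "partial True (snd \<circ> \<phi>) (0, 0) = 1/2"
proof -
  have U: "open U" "(0, 0) \<in> U" and C: "Cm_on (Suc k) (fst \<circ> \<phi>) U" "Cm_on (Suc k) (snd \<circ> \<phi>) U"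
    and D: "(\<phi> has_derivative (\<lambda>(x1, x2). (2 * x1, x2 / 2))) (at (0, 0))"
    using assms unfolding saddle_perturbation_def unit_box_def by auto
  have "(\<lambda>v. partial False (fst \<circ> \<phi>) (0, 0) * fst v + partial True (fst \<circ> \<phi>) (0, 0) * snd v)
      = (\<lambda>v. fst ((\<lambda>(x1, x2). (2 * x1, x2 / 2)) v))"
    using Cm_on_has_derivative[OF C(1) U] has_derivative_fst[OF D]
    unfolding comp_def by (rule has_derivative_unique)
  from fun_cong[OF this, of "(1, 0)"] fun_cong[OF this, of "(0, 1)"]
  show "partial False (fst \<circ> \<phi>) (0, 0) = 2" "partial True (fst \<circ> \<phi>) (0, 0) = 0" by simp_all
  have "(\<lambda>v. partial False (snd \<circ> \<phi>) (0, 0) * fst v + partial True (snd \<circ> \<phi>) (0, 0) * snd v)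
      = (\<lambda>v. snd ((\<lambda>(x1, x2). (2 * x1, x2 / 2)) v))"
    using Cm_on_has_derivative[OF C(2) U] has_derivative_snd[OF D]
    unfolding comp_def by (rule has_derivative_unique)
  from fun_cong[OF this, of "(1, 0)"] fun_cong[OF this, of "(0, 1)"]
  show "partial False (snd \<circ> \<phi>) (0, 0) = 0" "partial True (snd \<circ> \<phi>) (0, 0) = 1/2" by simp_all
qed

lemma saddle_perturbation_partial_near_origin:
  assumes \<phi>: "saddle_perturbation k U \<phi> \<delta>" and "1 \<le> k" and P: "P = fst \<circ> \<phi> \<or> P = snd \<circ> \<phi>"
    and p: "p \<in> unit_box"
  shows "\<bar>partial b P p - partial b P (0, 0)\<bar> \<le> 4 * \<delta>"
proof -
  obtain m where m: "k = Suc m" using \<open>1 \<le> k\<close> by (cases k) auto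
  have U: "open U" "unit_box \<subseteq> U" and C: "Cm_on (Suc (Suc m)) P U"
    using \<phi> P m unfolding saddle_perturbation_def by auto
  have second: "\<bar>partial b' (partial b P) q\<bar> \<le> \<delta>" if "q \<in> unit_box" for b' q
  proof -
    have "partial b' (partial b P) q = iter_partial [b', b] P q"
      using iter_partial_snoc[of "[b']" b P] by simp
    then show ?thesis using \<phi> P m that U(2) unfolding saddle_perturbation_def by auto
  qed
  have origin: "(0, 0) \<in> unit_box" unfolding unit_box_def by simp
  have "norm p \<le> 2"
    using norm_Pair_le[of "fst p" "snd p"] p unfolding unit_box_def by simp
  then have "2 * \<delta> * norm (p - (0, 0)) \<le> 2 * \<delta> * 2"
    using \<phi> unfolding saddle_perturbation_def by (simp add: zero_prod_def[symmetric])
  with unit_box_lipschitz[OF Cm_on_partial[OF C] U second p origin] show ?thesis by simp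
qed

lemma Cnorm_le_partial_along_graph:
  "\<exists>K>0. \<forall>U \<phi> \<delta> P F b. saddle_perturbation (Suc m) U \<phi> \<delta> \<and> (P = fst \<circ> \<phi> \<or> P = snd \<circ> \<phi>) \<and>
     Cnorm_le lip m 1 F \<longrightarrow> Cnorm_le lip m (K * \<delta>) (\<lambda>t. partial b P (t, F t) - partial b P (0, 0))"
proof -
  obtain K where K: "K > 0" "\<forall>P c \<beta> F U. open U \<and> unit_box \<subseteq> U \<and> Cm_on (m + 1) P U \<and>
      bounded_on_unit_box m P c \<beta> \<and> Cnorm_le lip m 1 F \<longrightarrow> Cnorm_le lip m (K * \<beta>) (\<lambda>t. P (t, F t) - c)"
    using Cnorm_le_along_graph by blast
  have "Cnorm_le lip m (4 * K * \<delta>) (\<lambda>t. partial b P (t, F t) - partial b P (0, 0))"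
    if \<phi>: "saddle_perturbation (Suc m) U \<phi> \<delta>" and P: "P = fst \<circ> \<phi> \<or> P = snd \<circ> \<phi>"
      and F: "Cnorm_le lip m 1 F" for U \<phi> \<delta> P F b
  proof -
    have U: "open U" "unit_box \<subseteq> U" and C: "Cm_on (Suc (m + 1)) P U" and "0 < \<delta>"
      using \<phi> P unfolding saddle_perturbation_def by auto
    have "bounded_on_unit_box m (partial b P) (partial b P (0, 0)) (4 * \<delta>)"
      unfolding bounded_on_unit_box_def
    proof (intro conjI allI impI ballI)
      show "\<bar>partial b P p - partial b P (0, 0)\<bar> \<le> 4 * \<delta>" if "p \<in> unit_box" for p
        using saddle_perturbation_partial_near_origin[OF \<phi> _ P that] by simp
      fix ds :: "bool list" and p assume "1 \<le> length ds \<and> length ds \<le> m + 1" "p \<in> unit_box"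
      then have "\<bar>iter_partial (ds @ [b]) P p\<bar> \<le> \<delta>"
        using \<phi> P U unfolding saddle_perturbation_def by auto
      then show "\<bar>iter_partial ds (partial b P) p\<bar> \<le> 4 * \<delta>"
        using \<open>0 < \<delta>\<close> unfolding iter_partial_snoc by simp
    qed
    then have "Cnorm_le lip m (K * (4 * \<delta>)) (\<lambda>t. partial b P (t, F t) - partial b P (0, 0))"
      using K(2) U Cm_on_partial[OF C] F by blast
    then show ?thesis by (simp add: mult_ac)
  qed
  with K(1) show ?thesis by (intro exI[of _ "4 * K"]) auto
qed

definition graph_deriv :: "(real \<times> real \<Rightarrow> real) \<Rightarrow> (real \<Rightarrow> real) \<Rightarrow> (nat \<Rightarrow> real \<Rightarrow> real) \<Rightarrow> real \<Rightarrow> real"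
  where "graph_deriv P F DF t = partial False P (t, F t) + partial True P (t, F t) * DF 1 t"

text \<open>For \<open>j \<ge> 1\<close>, \<open>transformed_deriv \<phi> F DF j t\<close> is the \<open>j\<close>-th derivative of \<open>\<Phi>\<^sub>u F\<close> at the point
  \<open>fst (\<phi> (t, F t))\<close>.\<close>
definition transformed_deriv ::
    "(real \<times> real \<Rightarrow> real \<times> real) \<Rightarrow> (real \<Rightarrow> real) \<Rightarrow> (nat \<Rightarrow> real \<Rightarrow> real) \<Rightarrow> nat \<Rightarrow> real \<Rightarrow> real" where
  "transformed_deriv \<phi> F DF j = (reparam_deriv (\<lambda>t. 1 / graph_deriv (fst \<circ> \<phi>) F DF t) ^^ (j - 1))
     (\<lambda>t. graph_deriv (snd \<circ> \<phi>) F DF t / graph_deriv (fst \<circ> \<phi>) F DF t)"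

definition transformed_expansion ::
    "bool \<Rightarrow> nat \<Rightarrow> (real \<times> real \<Rightarrow> real \<times> real) \<Rightarrow> (real \<Rightarrow> real) \<Rightarrow> (nat \<Rightarrow> real \<Rightarrow> real) \<Rightarrow> real \<Rightarrow> bool"
  where "transformed_expansion lip k \<phi> F DF \<epsilon> \<longleftrightarrow> (\<forall>i. 1 \<le> i \<and> i \<le> k \<longrightarrow> (\<exists>Rem. Cnorm_le lip (k - i) \<epsilon> Rem \<and>
     (\<forall>t\<in>I. transformed_deriv \<phi> F DF i t = DF i t / 2 ^ (i + 1) + Rem t)))"

lemma graph_transform_expansion:
  assumes k: "k = Suc m"
  shows "\<exists>\<delta>1>0. \<exists>C>0. \<forall>U \<phi> \<delta> F DF. saddle_perturbation k U \<phi> \<delta> \<and> \<delta> \<le> \<delta>1 \<and> Ck_interval k F DF \<and>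
    (\<forall>j\<le>k. \<forall>x\<in>I. \<bar>DF j x\<bar> \<le> 1) \<and> (lip \<longrightarrow> (\<forall>x\<in>I. \<forall>y\<in>I. \<bar>DF k x - DF k y\<bar> \<le> \<bar>x - y\<bar>)) \<longrightarrow>
    (\<forall>t\<in>I. 3/2 \<le> graph_deriv (fst \<circ> \<phi>) F DF t) \<and> transformed_expansion lip k \<phi> F DF (C * \<delta>)"
proof -
  obtain Kp where Kp: "Kp > 0" "\<forall>U \<phi> \<delta> P F b. saddle_perturbation k U \<phi> \<delta> \<and>
      (P = fst \<circ> \<phi> \<or> P = snd \<circ> \<phi>) \<and> Cnorm_le lip m 1 F \<longrightarrow>
      Cnorm_le lip m (Kp * \<delta>) (\<lambda>t. partial b P (t, F t) - partial b P (0, 0))"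
    using Cnorm_le_partial_along_graph[of m lip] k by blast
  obtain Cq where Cq: "Cq > 0" "\<forall>E1 E2 f \<epsilon>. Cnorm_le lip m \<epsilon> E1 \<and> Cnorm_le lip m \<epsilon> E2 \<and>
      Cnorm_le lip m 1 f \<and> \<epsilon> \<le> 1/2 \<longrightarrow>
      Cnorm_le lip m (Cq * \<epsilon>) (\<lambda>t. 1 / (2 + E1 t) - 1/2) \<and>
      Cnorm_le lip m (Cq * \<epsilon>) (\<lambda>t. (f t / 2 + E2 t) / (2 + E1 t) - f t / 4)"
    using Cnorm_le_quotient_expansion[of lip m] by blast
  define ce where "ce = Kp * (1 + 2 ^ (m + 1))"
  define Ce :: real where "Ce = 1 + 2 * (3 * 2 ^ k) ^ m"
  have ce: "0 < ce" and Ce: "0 < Ce" unfolding ce_def Ce_def using Kp by (simp_all add: add_pos_pos)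
  have pos: "0 < min (1 / (2 * ce)) (1 / (Cq * ce))" "0 < Ce * Cq * ce" using ce Ce Cq by auto
  show ?thesis
  proof (rule exI, rule conjI[OF pos(1)], rule exI, rule conjI[OF pos(2)], intro allI impI)
    fix U \<phi> \<delta> F DF
    assume a: "saddle_perturbation k U \<phi> \<delta> \<and> \<delta> \<le> min (1 / (2 * ce)) (1 / (Cq * ce)) \<and>
      Ck_interval k F DF \<and> (\<forall>j\<le>k. \<forall>x\<in>I. \<bar>DF j x\<bar> \<le> 1) \<and>
      (lip \<longrightarrow> (\<forall>x\<in>I. \<forall>y\<in>I. \<bar>DF k x - DF k y\<bar> \<le> \<bar>x - y\<bar>))"
    then have \<phi>: "saddle_perturbation k U \<phi> \<delta>" and F: "Ck_interval k F DF"
      "\<forall>j\<le>k. \<forall>x\<in>I. \<bar>DF j x\<bar> \<le> 1" "lip \<longrightarrow> (\<forall>x\<in>I. \<forall>y\<in>I. \<bar>DF k x - DF k y\<bar> \<le> \<bar>x - y\<bar>)"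
      by auto
    have "0 < \<delta>" using \<phi> unfolding saddle_perturbation_def by blast
    have small: "ce * \<delta> \<le> 1/2" "Cq * (ce * \<delta>) \<le> 1"
      using a ce Cq by (auto simp: field_simps)
    have "Cnorm_le lip k 1 (DF 0)" using Ck_interval_Cnorm_le[OF F, of 0] by simp
    then have Fm: "Cnorm_le lip m 1 F" using F(1) k unfolding Ck_interval_def
      by (metis Cnorm_le_Suc_imp)
    have DF1: "Cnorm_le lip m 1 (DF 1)" using Ck_interval_Cnorm_le[OF F, of 1] k by simp
    note origin = saddle_perturbation_partials_origin[OF \<phi>]
    have first_order: "Cnorm_le lip m (ce * \<delta>) (\<lambda>t. graph_deriv P F DF t - (c0 + c1 * DF 1 t))"
      if P: "P = fst \<circ> \<phi> \<or> P = snd \<circ> \<phi>" and c: "c0 = partial False P (0, 0)" "c1 = partial True P (0, 0)"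
      for P c0 c1
    proof -
      have "Cnorm_le lip m (Kp * \<delta> + 2 ^ (m + 1) * (Kp * \<delta>) * 1)
          (\<lambda>t. (partial False P (t, F t) - partial False P (0, 0)) +
               (partial True P (t, F t) - partial True P (0, 0)) * DF 1 t)"
        using Kp(2) \<phi> P Fm by (intro Cnorm_le_add Cnorm_le_mult DF1) blast+
      then show ?thesis unfolding graph_deriv_def c ce_def by (simp add: algebra_simps)
    qed
    define E1 where "E1 t = graph_deriv (fst \<circ> \<phi>) F DF t - 2" for t
    define E2 where "E2 t = graph_deriv (snd \<circ> \<phi>) F DF t - DF 1 t / 2" for t
    have E1: "Cnorm_le lip m (ce * \<delta>) E1"
      using first_order[of "fst \<circ> \<phi>" 2 0] origin unfolding E1_def by simp
    have E2: "Cnorm_le lip m (ce * \<delta>) E2"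
      using first_order[of "snd \<circ> \<phi>" 0 "1/2"] origin unfolding E2_def by simp
    have r: "Cnorm_le lip m (Cq * (ce * \<delta>)) (\<lambda>t. 1 / (2 + E1 t) - 1/2)"
      and S: "Cnorm_le lip m (Cq * (ce * \<delta>)) (\<lambda>t. (DF 1 t / 2 + E2 t) / (2 + E1 t) - DF 1 t / 4)"
      using Cq(2) E1 E2 DF1 small(1) by blast+
    have "\<forall>t\<in>I. 3/2 \<le> graph_deriv (fst \<circ> \<phi>) F DF t"
      using Cnorm_le_bound[OF E1] small(1) unfolding E1_def by force
    moreover have "\<exists>Rem. Cnorm_le lip (k - i) (Ce * Cq * ce * \<delta>) Rem \<and>
        (\<forall>t\<in>I. transformed_deriv \<phi> F DF i t = DF i t / 2 ^ (i + 1) + Rem t)" if "1 \<le> i" "i \<le> k" for i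
      using reparam_deriv_pow_expansion_of_slope[OF k F r S small(2), of _ _ i] that
      unfolding transformed_deriv_def E1_def E2_def Ce_def by (simp add: mult_ac)
    ultimately show "(\<forall>t\<in>I. 3/2 \<le> graph_deriv (fst \<circ> \<phi>) F DF t) \<and>
      transformed_expansion lip k \<phi> F DF (Ce * Cq * ce * \<delta>)"
      unfolding transformed_expansion_def by blast
  qed
qed

lemma transformed_expansion_Cnorm_le:
  assumes "transformed_expansion lip k \<phi> F DF \<epsilon>" and F: "Ck_interval k F DF" "\<forall>j\<le>k. \<forall>x\<in>I. \<bar>DF j x\<bar> \<le> 1"
    "lip \<longrightarrow> (\<forall>x\<in>I. \<forall>y\<in>I. \<bar>DF k x - DF k y\<bar> \<le> \<bar>x - y\<bar>)" and j: "1 \<le> j" "j \<le> k"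
  shows "Cnorm_le lip (k - j) (1 + \<epsilon>) (transformed_deriv \<phi> F DF j)"
proof -
  obtain Rem where Rem: "Cnorm_le lip (k - j) \<epsilon> Rem"
    "\<forall>t\<in>I. transformed_deriv \<phi> F DF j t = DF j t / 2 ^ (j + 1) + Rem t"
    using assms(1) j unfolding transformed_expansion_def by blast
  have "Cnorm_le lip (k - j) (\<bar>1 / 2 ^ (j + 1)\<bar> * 1 + \<epsilon>) (\<lambda>t. 1 / 2 ^ (j + 1) * DF j t + Rem t)"
    by (rule Cnorm_le_add[OF Cnorm_le_cmult[OF Ck_interval_Cnorm_le[OF F j(2)]] Rem(1)])
  then show ?thesis
  proof (rule Cnorm_le_cong[OF Cnorm_le_mono])
    have "(1 :: real) \<le> 2 ^ (j + 1)" by (rule one_le_power) simp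
    then show "\<bar>1 / 2 ^ (j + 1)\<bar> * 1 + \<epsilon> \<le> 1 + \<epsilon>" by simp
  qed (use Rem(2) in simp)
qed

lemma graph_u_image_eq:
  assumes u: "\<And>x. x \<in> I \<Longrightarrow> u x \<in> I \<and> fst (\<phi> (u x, F (u x))) = x"
    and inv: "\<And>t. t \<in> I \<Longrightarrow> \<bar>fst (\<phi> (t, F t))\<bar> \<le> 1 \<Longrightarrow> u (fst (\<phi> (t, F t))) = t"
  shows "\<phi> ` graph_u F \<inter> {p. \<bar>fst p\<bar> \<le> 1} = graph_u (\<lambda>x. snd (\<phi> (u x, F (u x))))"
proof
  show "\<phi> ` graph_u F \<inter> {p. \<bar>fst p\<bar> \<le> 1} \<subseteq> graph_u (\<lambda>x. snd (\<phi> (u x, F (u x))))"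
  proof
    fix p assume p: "p \<in> \<phi> ` graph_u F \<inter> {p. \<bar>fst p\<bar> \<le> 1}"
    then obtain t where "\<bar>t\<bar> \<le> 1" "p = \<phi> (t, F t)" unfolding graph_u_def by blast
    with p have t: "t \<in> I" "p = \<phi> (t, F t)" "\<bar>fst p\<bar> \<le> 1" by auto
    then have "u (fst p) = t" using inv by simp
    then show "p \<in> graph_u (\<lambda>x. snd (\<phi> (u x, F (u x))))"
      unfolding graph_u_def using t by (auto intro!: exI[of _ "fst p"])
  qed
  show "graph_u (\<lambda>x. snd (\<phi> (u x, F (u x)))) \<subseteq> \<phi> ` graph_u F \<inter> {p. \<bar>fst p\<bar> \<le> 1}"
  proof
    fix p assume "p \<in> graph_u (\<lambda>x. snd (\<phi> (u x, F (u x))))"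
    then obtain x where "\<bar>x\<bar> \<le> 1" "p = (x, snd (\<phi> (u x, F (u x))))" unfolding graph_u_def by blast
    then have x: "x \<in> I" "p = (x, snd (\<phi> (u x, F (u x))))" by auto
    then have "p = \<phi> (u x, F (u x))" using u by (metis prod.collapse)
    moreover have "\<bar>u x\<bar> \<le> 1" using u[OF x(1)] by auto
    then have "(u x, F (u x)) \<in> graph_u F" unfolding graph_u_def by auto
    moreover have "\<bar>fst p\<bar> \<le> 1" using x by auto
    ultimately show "p \<in> \<phi> ` graph_u F \<inter> {p. \<bar>fst p\<bar> \<le> 1}" by auto
  qed
qed

lemma Ck_interval_reparam:
  assumes u: "\<And>x. x \<in> I \<Longrightarrow> u x \<in> {-2/3..2/3}"
    "\<And>x. x \<in> I \<Longrightarrow> (u has_real_derivative w (u x)) (at x within I)"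
    and h: "\<And>t. t \<in> I \<Longrightarrow> (h has_real_derivative h' t) (at t within I)"
    and G1: "\<And>t. G 1 t = h' t * w t" and G: "\<And>j. 1 \<le> j \<Longrightarrow> G (Suc j) = reparam_deriv w (G j)"
    and smooth: "\<And>j. 1 \<le> j \<Longrightarrow> j \<le> k \<Longrightarrow> \<exists>B. Cnorm_le False (k - j) B (G j)"
  shows "Ck_interval k (\<lambda>x. h (u x)) (\<lambda>j x. if j = 0 then h (u x) else G j (u x))"
proof -
  have uI: "u x \<in> I" and at_u: "at (u x) within I = at (u x)" if "x \<in> I" for x
    using u(1)[OF that] by (auto intro!: at_within_Icc_at)
  have chain: "((\<lambda>x. f (u x)) has_real_derivative f' (u x) * w (u x)) (at x within I)"
    if "x \<in> I" "(f has_real_derivative f' (u x)) (at (u x) within I)" for f f' x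
    using DERIV_chain2[OF _ u(2)[OF that(1)], of f] that at_u by simp
  have cont_comp: "continuous_on I (\<lambda>x. f (u x))" if "continuous_on I f" for f :: "real \<Rightarrow> real"
    using continuous_on_compose2[OF that DERIV_continuous_on[OF u(2)]] uI by blast
  show ?thesis unfolding Ck_interval_def
  proof (intro conjI allI impI ballI)
    show "(\<lambda>j x. if j = 0 then h (u x) else G j (u x)) 0 = (\<lambda>x. h (u x))" by simp
    fix j x assume "j < k" "x \<in> I"
    show "((\<lambda>j x. if j = 0 then h (u x) else G j (u x)) j has_real_derivative
        (\<lambda>j x. if j = 0 then h (u x) else G j (u x)) (Suc j) x) (at x within I)"
    proof (cases "j = 0")
      case True
      then show ?thesis using chain[where f = h and f' = h', OF \<open>x \<in> I\<close> h[OF uI[OF \<open>x \<in> I\<close>]]] G1 by simp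
    next
      case False
      then obtain B where "Cnorm_le False (Suc (k - Suc j)) B (G j)"
        using smooth[of j] \<open>j < k\<close> by (auto simp: Suc_diff_Suc)
      from chain[where f = "G j" and f' = "derivI (G j)", OF \<open>x \<in> I\<close>
          Cnorm_le_derivI(2)[OF this uI[OF \<open>x \<in> I\<close>]]]
      show ?thesis using False G[of j] by (simp add: reparam_deriv_def)
    qed
  next
    fix j assume "j \<le> k"
    show "continuous_on I ((\<lambda>j x. if j = 0 then h (u x) else G j (u x)) j)"
    proof (cases "j = 0")
      case True
      then show ?thesis using cont_comp[OF DERIV_continuous_on[OF h]] by simp
    next
      case False
      then obtain B where "Cnorm_le False (k - j) B (G j)" using smooth[of j] \<open>j \<le> k\<close> by auto
      then show ?thesis using False cont_comp[OF Cnorm_le_continuous] by simp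
    qed
  qed
qed

lemma Ck_seminorm_le_of_expansion:
  assumes "1 \<le> k" "\<forall>j\<le>k. continuous_on I (DF j)" and u: "\<And>x. x \<in> I \<Longrightarrow> u x \<in> I"
    and DH: "\<And>j x. 1 \<le> j \<Longrightarrow> j \<le> k \<Longrightarrow> x \<in> I \<Longrightarrow> \<bar>DH j x - DF j (u x) / 2 ^ (j + 1)\<bar> \<le> \<epsilon>"
  shows "Ck_seminorm k DH \<le> Ck_seminorm k DF / 4 + \<epsilon>"
proof (rule Ck_seminorm_least[OF \<open>1 \<le> k\<close>])
  fix j x assume j: "1 \<le> j" "j \<le> k" and x: "x \<in> I"
  have "\<bar>DF j (u x)\<bar> \<le> Ck_seminorm k DF" by (rule Ck_seminorm_upper[OF assms(2) j u[OF x]])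
  moreover have "(4 :: real) \<le> 2 ^ (j + 1)" using power_increasing[of 2 "j + 1" "2 :: real"] j by simp
  ultimately have "\<bar>DF j (u x)\<bar> / 2 ^ (j + 1) \<le> Ck_seminorm k DF / 4"
    by (intro frac_le) auto
  moreover have "\<bar>DH j x\<bar> \<le> \<bar>DH j x - DF j (u x) / 2 ^ (j + 1)\<bar> + \<bar>DF j (u x)\<bar> / 2 ^ (j + 1)"
    using abs_triangle_ineq[of "DH j x - DF j (u x) / 2 ^ (j + 1)" "DF j (u x) / 2 ^ (j + 1)"]
    by (simp add: abs_div)
  ultimately show "\<bar>DH j x\<bar> \<le> Ck_seminorm k DF / 4 + \<epsilon>" using DH[OF j x] by linarith
qed

lemma lipschitz_of_expansion:
  assumes u: "\<And>x. x \<in> I \<Longrightarrow> u x \<in> I" "\<And>x y. x \<in> I \<Longrightarrow> y \<in> I \<Longrightarrow> \<bar>u x - u y\<bar> \<le> \<bar>x - y\<bar>"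
    and "1 \<le> k" and DF: "\<forall>x\<in>I. \<forall>y\<in>I. \<bar>DF k x - DF k y\<bar> \<le> M * \<bar>x - y\<bar>"
    and DH: "\<And>x. x \<in> I \<Longrightarrow> DH k x = DF k (u x) / 2 ^ (k + 1) + R (u x)"
    and R: "\<And>x y. x \<in> I \<Longrightarrow> y \<in> I \<Longrightarrow> \<bar>R x - R y\<bar> \<le> \<epsilon> * \<bar>x - y\<bar>" and "0 \<le> \<epsilon>"
    and "x \<in> I" "y \<in> I"
  shows "\<bar>DH k x - DH k y\<bar> \<le> (Lip_seminorm k DF / 4 + \<epsilon>) * \<bar>x - y\<bar>"
proof -
  define a b where "a = u x" and "b = u y"
  have ab: "a \<in> I" "b \<in> I" "\<bar>a - b\<bar> \<le> \<bar>x - y\<bar>" unfolding a_def b_def using u assms(8,9) by auto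
  have l: "0 \<le> Lip_seminorm k DF" using Lip_seminorm_nonneg[where D = DF and k = k, OF DF] .
  have "\<bar>DF k a - DF k b\<bar> / 2 ^ (k + 1) \<le> Lip_seminorm k DF * \<bar>a - b\<bar> / 4"
  proof (rule frac_le)
    show "\<bar>DF k a - DF k b\<bar> \<le> Lip_seminorm k DF * \<bar>a - b\<bar>"
      by (rule Lip_seminorm_upper[where D = DF and k = k, OF DF ab(1,2)])
    show "(4 :: real) \<le> 2 ^ (k + 1)" using power_increasing[of 2 "k + 1" "2 :: real"] \<open>1 \<le> k\<close> by simp
  qed (use l in auto)
  moreover have "DH k x - DH k y = (DF k a - DF k b) / 2 ^ (k + 1) + (R a - R b)"
    using DH assms(8,9) unfolding a_def b_def by (simp add: diff_divide_distrib)
  moreover have "\<bar>(DF k a - DF k b) / 2 ^ (k + 1) + (R a - R b)\<bar>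
      \<le> \<bar>DF k a - DF k b\<bar> / 2 ^ (k + 1) + \<bar>R a - R b\<bar>"
    using abs_triangle_ineq[of "(DF k a - DF k b) / 2 ^ (k + 1)" "R a - R b"] by (simp add: abs_div)
  ultimately have "\<bar>DH k x - DH k y\<bar> \<le> Lip_seminorm k DF * \<bar>a - b\<bar> / 4 + \<epsilon> * \<bar>a - b\<bar>"
    using R[OF ab(1,2)] by linarith
  also have "\<dots> = (Lip_seminorm k DF / 4 + \<epsilon>) * \<bar>a - b\<bar>" by (simp add: algebra_simps)
  also have "\<dots> \<le> (Lip_seminorm k DF / 4 + \<epsilon>) * \<bar>x - y\<bar>"
    using ab(3) l \<open>0 \<le> \<epsilon>\<close> by (intro mult_left_mono) auto
  finally show ?thesis .
qed

lemma graph_transform_representation: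
  assumes \<phi>: "saddle_perturbation k U \<phi> \<delta>" and F: "Ck_interval k F DF" "\<forall>j\<le>k. \<forall>x\<in>I. \<bar>DF j x\<bar> \<le> 1"
    and "1 \<le> k" "F 0 = 0"
    and expanding: "\<And>t. t \<in> I \<Longrightarrow> 3/2 \<le> graph_deriv (fst \<circ> \<phi>) F DF t"
    and smooth: "\<And>j. 1 \<le> j \<Longrightarrow> j \<le> k \<Longrightarrow> \<exists>B. Cnorm_le False (k - j) B (transformed_deriv \<phi> F DF j)"
  obtains u where "\<And>x. x \<in> I \<Longrightarrow> u x \<in> I"
    "\<And>x y. x \<in> I \<Longrightarrow> y \<in> I \<Longrightarrow> \<bar>u x - u y\<bar> \<le> \<bar>x - y\<bar>"
    "\<phi> ` graph_u F \<inter> {p. \<bar>fst p\<bar> \<le> 1} = graph_u (\<lambda>x. snd (\<phi> (u x, F (u x))))"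
    "Ck_interval k (\<lambda>x. snd (\<phi> (u x, F (u x))))
       (\<lambda>j x. if j = 0 then snd (\<phi> (u x, F (u x))) else transformed_deriv \<phi> F DF j (u x))"
proof -
  have U: "open U" "unit_box \<subseteq> U" and C: "Cm_on (Suc k) (fst \<circ> \<phi>) U" "Cm_on (Suc k) (snd \<circ> \<phi>) U"
    and "\<phi> (0, 0) = (0, 0)"
    using \<phi> unfolding saddle_perturbation_def by auto
  have F_deriv: "(F has_real_derivative DF 1 t) (at t within I)" and F_bound: "\<bar>F t\<bar> \<le> 1"
    if "t \<in> I" for t
    using F \<open>1 \<le> k\<close> that unfolding Ck_interval_def by auto
  have along: "((\<lambda>t. P (t, F t)) has_real_derivative graph_deriv P F DF t) (at t within I)"
    if "P = fst \<circ> \<phi> \<or> P = snd \<circ> \<phi>" "t \<in> I" for P t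
    using has_real_derivative_along_graph[of k P U, OF _ U that(2) F_bound F_deriv] C that
    unfolding graph_deriv_def by auto
  define w where "w t = 1 / graph_deriv (fst \<circ> \<phi>) F DF t" for t
  obtain u where u: "\<And>x. x \<in> I \<Longrightarrow> u x \<in> {-2/3..2/3} \<and> fst (\<phi> (u x, F (u x))) = x"
    "\<And>t. t \<in> I \<Longrightarrow> \<bar>fst (\<phi> (t, F t))\<bar> \<le> 1 \<Longrightarrow> u (fst (\<phi> (t, F t))) = t"
    "\<And>x. x \<in> I \<Longrightarrow> (u has_real_derivative w (u x)) (at x within I)"
    using inverse_of_expanding_map[of "\<lambda>t. fst (\<phi> (t, F t))" "graph_deriv (fst \<circ> \<phi>) F DF"]
      along[of "fst \<circ> \<phi>"] expanding \<open>F 0 = 0\<close> \<open>\<phi> (0, 0) = (0, 0)\<close>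
    unfolding w_def by (auto simp: inverse_eq_divide)
  show thesis
  proof
    show uI: "u x \<in> I" if "x \<in> I" for x using u(1)[OF that] by auto
    show "\<bar>u x - u y\<bar> \<le> \<bar>x - y\<bar>" if "x \<in> I" "y \<in> I" for x y
    proof -
      have "\<bar>w (u x)\<bar> \<le> 1" if "x \<in> I" for x
        using expanding[OF uI[OF that]] unfolding w_def by simp
      from lipschitz_of_deriv_bound[OF u(3) this that] show ?thesis by simp
    qed
    show "\<phi> ` graph_u F \<inter> {p. \<bar>fst p\<bar> \<le> 1} = graph_u (\<lambda>x. snd (\<phi> (u x, F (u x))))"
      using u(1,2) uI by (intro graph_u_image_eq) auto
    show "Ck_interval k (\<lambda>x. snd (\<phi> (u x, F (u x))))
       (\<lambda>j x. if j = 0 then snd (\<phi> (u x, F (u x))) else transformed_deriv \<phi> F DF j (u x))"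
    proof (rule Ck_interval_reparam[where w = w])
      show "transformed_deriv \<phi> F DF 1 t = graph_deriv (snd \<circ> \<phi>) F DF t * w t" for t
        unfolding transformed_deriv_def w_def by simp
      show "transformed_deriv \<phi> F DF (Suc j) = reparam_deriv w (transformed_deriv \<phi> F DF j)" if "1 \<le> j" for j
        using that unfolding transformed_deriv_def w_def by (cases j) auto
    qed (use u(1,3) along[of "snd \<circ> \<phi>"] smooth in auto)
  qed
qed

definition graph_transform_estimate ::
    "nat \<Rightarrow> (real \<times> real \<Rightarrow> real \<times> real) \<Rightarrow> (real \<Rightarrow> real) \<Rightarrow> (nat \<Rightarrow> real \<Rightarrow> real) \<Rightarrow> real \<Rightarrow> real \<Rightarrow> bool"
  where "graph_transform_estimate k \<phi> F DF \<delta> C \<longleftrightarrow>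
    (\<exists>H DH. \<phi> ` graph_u F \<inter> {p. \<bar>fst p\<bar> \<le> 1} = graph_u H \<and>
       Ck_interval k H DH \<and>
       Ck_seminorm k DH \<le> Ck_seminorm k DF / 4 + C * \<delta> \<and>
       (Ck1_seminorm k DF \<le> 1 \<and>
        (\<forall>x\<in>{-1..1}. \<forall>y\<in>{-1..1}. \<bar>DF k x - DF k y\<bar> \<le> \<bar>x - y\<bar>)
        \<longrightarrow>
        (\<forall>x\<in>{-1..1}. \<forall>y\<in>{-1..1}. x \<noteq> y \<longrightarrow>
           \<bar>DH k x - DH k y\<bar> / \<bar>x - y\<bar> \<le> Ck1_seminorm k DF / 4 + C * \<delta>) \<and>
        Ck1_seminorm k DH \<le> Ck1_seminorm k DF / 4 + C * \<delta>))"

lemma Ck1_seminorm_le_of_lipschitz: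
  assumes "Ck_seminorm k DH \<le> Ck_seminorm k DF / 4 + \<epsilon>"
    and lip: "\<And>x y. x \<in> I \<Longrightarrow> y \<in> I \<Longrightarrow> \<bar>DH k x - DH k y\<bar> \<le> (Lip_seminorm k DF / 4 + \<epsilon>) * \<bar>x - y\<bar>"
  shows "(\<forall>x\<in>I. \<forall>y\<in>I. x \<noteq> y \<longrightarrow> \<bar>DH k x - DH k y\<bar> / \<bar>x - y\<bar> \<le> Ck1_seminorm k DF / 4 + \<epsilon>) \<and>
    Ck1_seminorm k DH \<le> Ck1_seminorm k DF / 4 + \<epsilon>"
proof -
  have ratio: "\<bar>DH k x - DH k y\<bar> / \<bar>x - y\<bar> \<le> Ck1_seminorm k DF / 4 + \<epsilon>"
    if "x \<in> I" "y \<in> I" "x \<noteq> y" for x y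
  proof -
    have "\<bar>DH k x - DH k y\<bar> / \<bar>x - y\<bar> \<le> Lip_seminorm k DF / 4 + \<epsilon>"
      using lip[OF that(1,2)] that(3) by (simp add: divide_le_eq)
    then show ?thesis unfolding Ck1_seminorm_def by simp
  qed
  moreover have "Lip_seminorm k DH \<le> Ck1_seminorm k DF / 4 + \<epsilon>"
    by (rule Lip_seminorm_least) (rule ratio)
  moreover have "Ck_seminorm k DH \<le> Ck1_seminorm k DF / 4 + \<epsilon>"
    using assms(1) unfolding Ck1_seminorm_def by simp
  ultimately show ?thesis unfolding Ck1_seminorm_def[of k DH] by simp
qed

lemma seminorm_estimates_of_expansion:
  assumes "1 \<le> k" and F: "Ck_interval k F DF"
    and u: "\<And>x. x \<in> I \<Longrightarrow> u x \<in> I" "\<And>x y. x \<in> I \<Longrightarrow> y \<in> I \<Longrightarrow> \<bar>u x - u y\<bar> \<le> \<bar>x - y\<bar>"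
    and DH: "\<And>j x. 1 \<le> j \<Longrightarrow> DH j x = transformed_deriv \<phi> F DF j (u x)"
    and expansion: "transformed_expansion False k \<phi> F DF \<epsilon>"
    and lip_expansion: "(\<forall>x\<in>I. \<forall>y\<in>I. \<bar>DF k x - DF k y\<bar> \<le> \<bar>x - y\<bar>) \<Longrightarrow>
       transformed_expansion True k \<phi> F DF \<epsilon>"
  shows "Ck_seminorm k DH \<le> Ck_seminorm k DF / 4 + \<epsilon>"
    and "(\<forall>x\<in>I. \<forall>y\<in>I. \<bar>DF k x - DF k y\<bar> \<le> \<bar>x - y\<bar>) \<Longrightarrow>
      (\<forall>x\<in>I. \<forall>y\<in>I. x \<noteq> y \<longrightarrow> \<bar>DH k x - DH k y\<bar> / \<bar>x - y\<bar> \<le> Ck1_seminorm k DF / 4 + \<epsilon>) \<and>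
      Ck1_seminorm k DH \<le> Ck1_seminorm k DF / 4 + \<epsilon>"
proof -
  show sem: "Ck_seminorm k DH \<le> Ck_seminorm k DF / 4 + \<epsilon>"
  proof (rule Ck_seminorm_le_of_expansion[OF \<open>1 \<le> k\<close> _ u(1)])
    show "\<forall>j\<le>k. continuous_on I (DF j)" using F unfolding Ck_interval_def by blast
    fix j x assume j: "1 \<le> j" "j \<le> k" and x: "x \<in> I"
    obtain Rem where Rem: "Cnorm_le False (k - j) \<epsilon> Rem"
      "\<forall>t\<in>I. transformed_deriv \<phi> F DF j t = DF j t / 2 ^ (j + 1) + Rem t"
      using expansion j unfolding transformed_expansion_def by blast
    have "\<bar>Rem (u x)\<bar> \<le> \<epsilon>" using Cnorm_le_bound[OF Rem(1) u(1)[OF x]] .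
    then show "\<bar>DH j x - DF j (u x) / 2 ^ (j + 1)\<bar> \<le> \<epsilon>"
      using DH[OF j(1)] Rem(2) u(1)[OF x] by simp
  qed
  assume lip: "\<forall>x\<in>I. \<forall>y\<in>I. \<bar>DF k x - DF k y\<bar> \<le> \<bar>x - y\<bar>"
  obtain Rem where Rem: "Cnorm_le True (k - k) \<epsilon> Rem"
    "\<forall>t\<in>I. transformed_deriv \<phi> F DF k t = DF k t / 2 ^ (k + 1) + Rem t"
    using lip_expansion[OF lip, unfolded transformed_expansion_def, rule_format, of k] \<open>1 \<le> k\<close>
    by blast
  have "\<bar>DH k x - DH k y\<bar> \<le> (Lip_seminorm k DF / 4 + \<epsilon>) * \<bar>x - y\<bar>" if "x \<in> I" "y \<in> I" for x y
  proof (rule lipschitz_of_expansion[OF u \<open>1 \<le> k\<close>, where M = 1])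
    show "\<forall>x\<in>I. \<forall>y\<in>I. \<bar>DF k x - DF k y\<bar> \<le> 1 * \<bar>x - y\<bar>" using lip by simp
    show "DH k x = DF k (u x) / 2 ^ (k + 1) + Rem (u x)" if "x \<in> I" for x
      using DH[OF \<open>1 \<le> k\<close>] Rem(2) u(1)[OF that] by simp
    show "\<bar>Rem x - Rem y\<bar> \<le> \<epsilon> * \<bar>x - y\<bar>" if "x \<in> I" "y \<in> I" for x y
      using Cnorm_le_lipschitz[OF Rem(1) that] .
    show "0 \<le> \<epsilon>" using Cnorm_le_nonneg[OF Rem(1)] .
  qed (use that in auto)
  with sem show "(\<forall>x\<in>I. \<forall>y\<in>I. x \<noteq> y \<longrightarrow> \<bar>DH k x - DH k y\<bar> / \<bar>x - y\<bar> \<le> Ck1_seminorm k DF / 4 + \<epsilon>) \<and>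
      Ck1_seminorm k DH \<le> Ck1_seminorm k DF / 4 + \<epsilon>"
    by (rule Ck1_seminorm_le_of_lipschitz)
qed

lemma transformed_expansion_mono:
  "transformed_expansion lip k \<phi> F DF \<epsilon> \<Longrightarrow> \<epsilon> \<le> \<epsilon>' \<Longrightarrow> transformed_expansion lip k \<phi> F DF \<epsilon>'"
  unfolding transformed_expansion_def by (meson Cnorm_le_mono)

lemma graph_transform_estimate_mono:
  "graph_transform_estimate k \<phi> F DF \<delta> C \<Longrightarrow> 0 < \<delta> \<Longrightarrow> C \<le> C' \<Longrightarrow> graph_transform_estimate k \<phi> F DF \<delta> C'"
  unfolding graph_transform_estimate_def
  by (smt (verit, best) mult_right_mono)

lemma graph_transform_estimate_of_expansion:
  assumes \<phi>: "saddle_perturbation k U \<phi> \<delta>" and F: "Ck_interval k F DF" "F 0 = 0" and "1 \<le> k"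
    and bound: "\<forall>j\<le>k. \<forall>x\<in>I. \<bar>DF j x\<bar> \<le> 1"
    and expanding: "\<forall>t\<in>I. 3/2 \<le> graph_deriv (fst \<circ> \<phi>) F DF t"
    and expansion: "transformed_expansion False k \<phi> F DF (C * \<delta>)"
    and lip_expansion: "(\<forall>x\<in>I. \<forall>y\<in>I. \<bar>DF k x - DF k y\<bar> \<le> \<bar>x - y\<bar>) \<Longrightarrow>
      transformed_expansion True k \<phi> F DF (C * \<delta>)"
  shows "graph_transform_estimate k \<phi> F DF \<delta> C"
proof -
  obtain u where u: "\<And>x. x \<in> I \<Longrightarrow> u x \<in> I"
    "\<And>x y. x \<in> I \<Longrightarrow> y \<in> I \<Longrightarrow> \<bar>u x - u y\<bar> \<le> \<bar>x - y\<bar>"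
    "\<phi> ` graph_u F \<inter> {p. \<bar>fst p\<bar> \<le> 1} = graph_u (\<lambda>x. snd (\<phi> (u x, F (u x))))"
    "Ck_interval k (\<lambda>x. snd (\<phi> (u x, F (u x))))
       (\<lambda>j x. if j = 0 then snd (\<phi> (u x, F (u x))) else transformed_deriv \<phi> F DF j (u x))"
    using graph_transform_representation[OF \<phi> F(1) bound \<open>1 \<le> k\<close> F(2)] expanding
      transformed_expansion_Cnorm_le[OF expansion F(1) bound] by blast
  define DH where "DH j x = (if j = 0 then snd (\<phi> (u x, F (u x))) else transformed_deriv \<phi> F DF j (u x))"
    for j x
  have "Ck_seminorm k DH \<le> Ck_seminorm k DF / 4 + C * \<delta>"
    and "(\<forall>x\<in>I. \<forall>y\<in>I. \<bar>DF k x - DF k y\<bar> \<le> \<bar>x - y\<bar>) \<Longrightarrow>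
      (\<forall>x\<in>I. \<forall>y\<in>I. x \<noteq> y \<longrightarrow> \<bar>DH k x - DH k y\<bar> / \<bar>x - y\<bar> \<le> Ck1_seminorm k DF / 4 + C * \<delta>) \<and>
      Ck1_seminorm k DH \<le> Ck1_seminorm k DF / 4 + C * \<delta>"
    using seminorm_estimates_of_expansion[of k F DF u DH \<phi> "C * \<delta>"] \<open>1 \<le> k\<close> F(1) u(1,2) expansion
      lip_expansion unfolding DH_def by auto
  then show ?thesis
    unfolding graph_transform_estimate_def using u(3,4) unfolding DH_def[abs_def] by blast
qed

lemma graph_transform_estimate_fixed_order:
  assumes "1 \<le> k"
  shows "\<exists>K>0. \<forall>U \<phi> \<delta> F DF. saddle_perturbation k U \<phi> \<delta> \<and> \<delta> \<le> 1 / K \<and>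
    Ck_interval k F DF \<and> F 0 = 0 \<and> Ck_seminorm k DF \<le> 1 \<longrightarrow> graph_transform_estimate k \<phi> F DF \<delta> K"
proof -
  obtain m where k: "k = Suc m" using assms by (cases k) auto
  obtain \<delta>F CF where CF: "0 < \<delta>F" "\<forall>U \<phi> \<delta> F DF. saddle_perturbation k U \<phi> \<delta> \<and> \<delta> \<le> \<delta>F \<and>
      Ck_interval k F DF \<and> (\<forall>j\<le>k. \<forall>x\<in>I. \<bar>DF j x\<bar> \<le> 1) \<and>
      (False \<longrightarrow> (\<forall>x\<in>I. \<forall>y\<in>I. \<bar>DF k x - DF k y\<bar> \<le> \<bar>x - y\<bar>)) \<longrightarrow>
      (\<forall>t\<in>I. 3/2 \<le> graph_deriv (fst \<circ> \<phi>) F DF t) \<and> transformed_expansion False k \<phi> F DF (CF * \<delta>)"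
    using graph_transform_expansion[OF k, of False] by blast
  obtain \<delta>T CT where CT: "0 < \<delta>T" "\<forall>U \<phi> \<delta> F DF. saddle_perturbation k U \<phi> \<delta> \<and> \<delta> \<le> \<delta>T \<and>
      Ck_interval k F DF \<and> (\<forall>j\<le>k. \<forall>x\<in>I. \<bar>DF j x\<bar> \<le> 1) \<and>
      (True \<longrightarrow> (\<forall>x\<in>I. \<forall>y\<in>I. \<bar>DF k x - DF k y\<bar> \<le> \<bar>x - y\<bar>)) \<longrightarrow>
      (\<forall>t\<in>I. 3/2 \<le> graph_deriv (fst \<circ> \<phi>) F DF t) \<and> transformed_expansion True k \<phi> F DF (CT * \<delta>)"
    using graph_transform_expansion[OF k, of True] by blast
  define K where "K = max (max CF CT) (max (1 / \<delta>F) (1 / \<delta>T))"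
  have K: "CF \<le> K" "CT \<le> K" "1 / \<delta>F \<le> K" "1 / \<delta>T \<le> K" unfolding K_def by auto
  moreover have "0 < 1 / \<delta>F" using CF(1) by simp
  ultimately have "0 < K" by linarith
  have small: "1 / K \<le> \<delta>F" "1 / K \<le> \<delta>T"
    using K(3,4) le_imp_inverse_le[of "1 / \<delta>F" K] le_imp_inverse_le[of "1 / \<delta>T" K] CF(1) CT(1)
    by (simp_all add: inverse_eq_divide)
  have "graph_transform_estimate k \<phi> F DF \<delta> K"
    if a: "saddle_perturbation k U \<phi> \<delta> \<and> \<delta> \<le> 1 / K \<and> Ck_interval k F DF \<and> F 0 = 0 \<and> Ck_seminorm k DF \<le> 1"
    for U \<phi> \<delta> F DF
  proof -
    have \<phi>: "saddle_perturbation k U \<phi> \<delta>" and F: "Ck_interval k F DF" "F 0 = 0"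
      and bound: "\<forall>j\<le>k. \<forall>x\<in>I. \<bar>DF j x\<bar> \<le> 1"
      using a Ck_interval_bounded[OF _ assms] by auto
    have "0 < \<delta>" using \<phi> unfolding saddle_perturbation_def by blast
    have "\<delta> \<le> \<delta>F" "\<delta> \<le> \<delta>T" using a small by linarith+
    then have expF: "(\<forall>t\<in>I. 3/2 \<le> graph_deriv (fst \<circ> \<phi>) F DF t) \<and>
        transformed_expansion False k \<phi> F DF (CF * \<delta>)"
      and expT: "(\<forall>x\<in>I. \<forall>y\<in>I. \<bar>DF k x - DF k y\<bar> \<le> \<bar>x - y\<bar>) \<Longrightarrow>
        transformed_expansion True k \<phi> F DF (CT * \<delta>)"
      using CF(2) CT(2) \<phi> F(1) bound by blast+
    show ?thesis
    proof (rule graph_transform_estimate_of_expansion[OF \<phi> F assms bound])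
      show "\<forall>t\<in>I. 3/2 \<le> graph_deriv (fst \<circ> \<phi>) F DF t" using expF by blast
      show "transformed_expansion False k \<phi> F DF (K * \<delta>)"
        using expF K(1) \<open>0 < \<delta>\<close> by (blast intro: transformed_expansion_mono mult_right_mono less_imp_le)
      show "transformed_expansion True k \<phi> F DF (K * \<delta>)"
        if "\<forall>x\<in>I. \<forall>y\<in>I. \<bar>DF k x - DF k y\<bar> \<le> \<bar>x - y\<bar>"
        using expT[OF that] K(2) \<open>0 < \<delta>\<close> by (blast intro: transformed_expansion_mono mult_right_mono less_imp_le)
    qed
  qed
  with \<open>0 < K\<close> show ?thesis by blast
qed

lemma ex_uniform_constant:
  fixes P :: "nat \<Rightarrow> real \<Rightarrow> bool"
  assumes "\<And>j. j \<le> m \<Longrightarrow> \<exists>K>0. P j K" and "\<And>j K K'. P j K \<Longrightarrow> 0 < K \<Longrightarrow> K \<le> K' \<Longrightarrow> P j K'"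
  shows "\<exists>K>0. \<forall>j\<le>m. P j K"
  using assms(1)
proof (induction m)
  case (Suc m)
  then obtain K1 where K1: "K1 > 0" "\<forall>j\<le>m. P j K1" by (meson le_Suc_eq)
  obtain K2 where K2: "K2 > 0" "P (Suc m) K2" using Suc.prems by blast
  have "\<forall>j\<le>Suc m. P j (max K1 K2)"
    using K1 K2 assms(2) by (metis le_Suc_eq max.cobounded1 max.cobounded2)
  then show ?case using K1 by (intro exI[of _ "max K1 K2"]) auto
qed auto

lemma graph_transform_estimate_uniform:
  "\<exists>K>0. \<forall>k U \<phi> \<delta> F DF. 1 \<le> k \<and> k \<le> N \<and> saddle_perturbation k U \<phi> \<delta> \<and> \<delta> \<le> 1 / K \<and>
    Ck_interval k F DF \<and> F 0 = 0 \<and> Ck_seminorm k DF \<le> 1 \<longrightarrow> graph_transform_estimate k \<phi> F DF \<delta> K"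
proof -
  define P where "P k K \<longleftrightarrow> (1 \<le> k \<longrightarrow> (\<forall>U \<phi> \<delta> F DF. saddle_perturbation k U \<phi> \<delta> \<and> \<delta> \<le> 1 / K \<and>
     Ck_interval k F DF \<and> F 0 = 0 \<and> Ck_seminorm k DF \<le> 1 \<longrightarrow> graph_transform_estimate k \<phi> F DF \<delta> K))"
    for k K
  have "\<exists>K>0. \<forall>k\<le>N. P k K"
  proof (rule ex_uniform_constant)
    show "\<exists>K>0. P k K" for k
    proof (cases "1 \<le> k")
      case True
      then show ?thesis using graph_transform_estimate_fixed_order[OF True] unfolding P_def by blast
    qed (auto simp: P_def intro: exI[of _ 1])
    show "P k K'" if "P k K" "0 < K" "K \<le> K'" for k K K'
      unfolding P_def
    proof (intro impI allI)
      fix U \<phi> \<delta> F DF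
      assume "1 \<le> k" and a: "saddle_perturbation k U \<phi> \<delta> \<and> \<delta> \<le> 1 / K' \<and>
        Ck_interval k F DF \<and> F 0 = 0 \<and> Ck_seminorm k DF \<le> 1"
      have "1 / K' \<le> 1 / K" using that(2,3) by (intro divide_left_mono) auto
      then have "\<delta> \<le> 1 / K" using a by linarith
      then have "graph_transform_estimate k \<phi> F DF \<delta> K"
        using that(1) \<open>1 \<le> k\<close> a unfolding P_def by blast
      moreover have "0 < \<delta>" using a unfolding saddle_perturbation_def by blast
      ultimately show "graph_transform_estimate k \<phi> F DF \<delta> K'"
        using graph_transform_estimate_mono that(3) by blast
    qed
  qed
  then obtain K where K: "0 < K" "\<forall>k\<le>N. P k K" by blast
  show ?thesis
  proof (intro exI[of _ K] conjI allI impI)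
    fix k U \<phi> \<delta> F DF
    assume a: "1 \<le> k \<and> k \<le> N \<and> saddle_perturbation k U \<phi> \<delta> \<and> \<delta> \<le> 1 / K \<and>
      Ck_interval k F DF \<and> F 0 = 0 \<and> Ck_seminorm k DF \<le> 1"
    then have "P k K" using K(2) by blast
    with a show "graph_transform_estimate k \<phi> F DF \<delta> K" unfolding P_def by blast
  qed (rule K(1))
qed

lemma saddle_perturbation_of_diffeo:
  assumes "open U" "unit_box \<subseteq> U \<inter> V" "diffeo_onto_image (N + 1) \<phi> U V" "\<phi> (0, 0) = (0, 0)"
    "(\<phi> has_derivative (\<lambda>(x1, x2). (2 * x1, x2 / 2))) (at (0, 0))"
    "\<forall>ds. 2 \<le> length ds \<and> length ds \<le> N + 1 \<longrightarrow>
       (\<forall>p\<in>U. \<bar>iter_partial ds (fst \<circ> \<phi>) p\<bar> \<le> \<delta> \<and> \<bar>iter_partial ds (snd \<circ> \<phi>) p\<bar> \<le> \<delta>)"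
    "0 < \<delta>" "k \<le> N"
  shows "saddle_perturbation k U \<phi> \<delta>"
  using assms Cm_on_mono[of "N + 1" _ U "k + 1"]
  unfolding diffeo_onto_image_def saddle_perturbation_def by auto

theorem lemma2p4:
  fixes N :: nat
  assumes "N \<ge> 1"
  shows "\<exists>\<delta>0 C :: real. \<delta>0 > 0 \<and> C > 0 \<and>
    (\<forall>(U :: (real \<times> real) set) (V :: (real \<times> real) set)
       (\<phi> :: real \<times> real \<Rightarrow> real \<times> real) (\<delta> :: real) (k :: nat)
       (F :: real \<Rightarrow> real) (DF :: nat \<Rightarrow> real \<Rightarrow> real).
      open U \<and> open V \<and> unit_box \<subseteq> U \<inter> V \<and>
      diffeo_onto_image (N + 1) \<phi> U V \<and>
      \<phi> (0, 0) = (0, 0) \<and>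
      (\<phi> has_derivative (\<lambda>(x1, x2). (2 * x1, x2 / 2))) (at (0, 0)) \<and>
      (\<forall>ds. 2 \<le> length ds \<and> length ds \<le> N + 1 \<longrightarrow>
         (\<forall>p\<in>U. \<bar>iter_partial ds (fst \<circ> \<phi>) p\<bar> \<le> \<delta> \<and>
                 \<bar>iter_partial ds (snd \<circ> \<phi>) p\<bar> \<le> \<delta>)) \<and>
      0 < \<delta> \<and> \<delta> \<le> \<delta>0 \<and>
      1 \<le> k \<and> k \<le> N \<and>
      Ck_interval k F DF \<and> F 0 = 0 \<and> Ck_seminorm k DF \<le> 1
      \<longrightarrow>
      (\<exists>H DH. \<phi> ` graph_u F \<inter> {p. \<bar>fst p\<bar> \<le> 1} = graph_u H \<and>
         Ck_interval k H DH \<and>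
         Ck_seminorm k DH \<le> Ck_seminorm k DF / 4 + C * \<delta> \<and>
         (Ck1_seminorm k DF \<le> 1 \<and>
          (\<forall>x\<in>{-1..1}. \<forall>y\<in>{-1..1}. \<bar>DF k x - DF k y\<bar> \<le> \<bar>x - y\<bar>)
          \<longrightarrow>
          (\<forall>x\<in>{-1..1}. \<forall>y\<in>{-1..1}. x \<noteq> y \<longrightarrow>
             \<bar>DH k x - DH k y\<bar> / \<bar>x - y\<bar> \<le> Ck1_seminorm k DF / 4 + C * \<delta>) \<and>
          Ck1_seminorm k DH \<le> Ck1_seminorm k DF / 4 + C * \<delta>)))"
proof -
  obtain K where "0 < K" and estimate: "\<forall>k U \<phi> \<delta> F DF. 1 \<le> k \<and> k \<le> N \<and> saddle_perturbation k U \<phi> \<delta> \<and>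
      \<delta> \<le> 1 / K \<and> Ck_interval k F DF \<and> F 0 = 0 \<and> Ck_seminorm k DF \<le> 1 \<longrightarrow>
      graph_transform_estimate k \<phi> F DF \<delta> K"
    using graph_transform_estimate_uniform by blast
  show ?thesis unfolding graph_transform_estimate_def[symmetric]
  proof (rule exI[of _ "1 / K"], rule exI[of _ K], intro conjI allI impI, goal_cases)
    case (3 U V \<phi> \<delta> k F DF)
    then have "saddle_perturbation k U \<phi> \<delta>" by (intro saddle_perturbation_of_diffeo[of U V N]) auto
    with 3 show ?case using estimate by blast
  qed (use \<open>0 < K\<close> in simp_all)
qed

end
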